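(* There is an algorithm which, given a simple LQCA $A=(\Sigma,q,N,\delta)$ with $|N|=r$, decides whether all columns $U_A(\cdot,c)$, $c\in\mathcal C_A$, of its time evolution operator have norm $1$, in time $O(n^2)$ in the algebraic model of computation, where $n=|\Sigma|^{r+1}$.
   Context: A linear quantum cellular automaton (LQCA) is a tuple $A=(\Sigma,q,N,\delta)$ where $\Sigma$ is a finite nonempty set of states, $N=(a_1,\dots,a_r)$ is a strictly increasing sequence of integers, $\delta:\Sigma^r\to\mathbb C^\Sigma$ satisfies $\|\delta(w)\|>0$ for all $w$, and $q\in\Sigma$ satisfies $[\delta(q,\dots,q)](x)=1$ if $x=q$ and $0$ otherwise. It is simple if $a_r-a_1=r-1$. The input is the table of $\delta$. In the algebraic model, complex numbers occupy unit space and arithmetic operations and comparisons take unit time. A configuration is a map $c:\mathbb Z\to\Sigma$ with $c_i\ne q$ for only finitely many $i$; $\mathcal C_A$ is the set of configurations. With $c_{i+N}=(c_{i+a_1},\dots,c_{i+a_r})$, $U_A(d,c)=\prod_{i\in\mathbb Z}[\delta(c_{i+N})](d_i)$, and $U_A(\cdot,c)$ is the column $d\mapsto U_A(d,c)$ in $\ell_2(\mathcal C_A)$. *)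

theory Defs
  imports "HOL-Analysis.Analysis"
begin

text \<open>The state set Sigma is represented as {0..<k} (k = |Sigma|), the quiescent state
  is q < k, the neighbourhood N is a list of integers, and the local rule delta maps a word
  (list of length r = length N over {0..<k}) and a state x < k to a complex amplitude.\<close>

definition words :: "nat \<Rightarrow> nat \<Rightarrow> nat list set" where
  "words k r = {w. length w = r \<and> set w \<subseteq> {..<k}}"

definition lqca :: "nat \<Rightarrow> nat \<Rightarrow> int list \<Rightarrow> (nat list \<Rightarrow> nat \<Rightarrow> complex) \<Rightarrow> bool" where
  "lqca k q N \<delta> \<longleftrightarrow>
     0 < k \<and> q < k \<and> N \<noteq> [] \<and> sorted_wrt (<) N \<and>
     (\<forall>w \<in> words k (length N). (\<Sum>x<k. (cmod (\<delta> w x))\<^sup>2) > 0) \<and>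
     (\<forall>x<k. \<delta> (replicate (length N) q) x = (if x = q then 1 else 0))"

definition simple_lqca :: "nat \<Rightarrow> nat \<Rightarrow> int list \<Rightarrow> (nat list \<Rightarrow> nat \<Rightarrow> complex) \<Rightarrow> bool" where
  "simple_lqca k q N \<delta> \<longleftrightarrow> lqca k q N \<delta> \<and> last N - hd N = int (length N) - 1"

definition configs :: "nat \<Rightarrow> nat \<Rightarrow> (int \<Rightarrow> nat) set" where
  "configs k q = {c. (\<forall>i. c i < k) \<and> finite {i. c i \<noteq> q}}"

definition nbh :: "int list \<Rightarrow> (int \<Rightarrow> nat) \<Rightarrow> int \<Rightarrow> nat list" where
  "nbh N c i = map (\<lambda>a. c (i + a)) N"

text \<open>U_A(d,c) = prod over all i of delta(c_{i+N})(d_i). All factors outside the finite set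
  below equal 1 (there c_{i+N} = q...q and d_i = q), so the infinite product is this finite one.\<close>
definition U :: "nat \<Rightarrow> int list \<Rightarrow> (nat list \<Rightarrow> nat \<Rightarrow> complex) \<Rightarrow> (int \<Rightarrow> nat) \<Rightarrow> (int \<Rightarrow> nat) \<Rightarrow> complex" where
  "U q N \<delta> d c = (\<Prod>i \<in> {i. nbh N c i \<noteq> replicate (length N) q \<or> d i \<noteq> q}. \<delta> (nbh N c i) (d i))"

definition all_columns_unit :: "nat \<Rightarrow> nat \<Rightarrow> int list \<Rightarrow> (nat list \<Rightarrow> nat \<Rightarrow> complex) \<Rightarrow> bool" where
  "all_columns_unit k q N \<delta> \<longleftrightarrow>
     (\<forall>c \<in> configs k q. ((\<lambda>d. (cmod (U q N \<delta> d c))\<^sup>2) has_sum 1) (configs k q))"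

text \<open>Each instruction
  (arithmetic operation, conjugation, constant, indirect load/store, comparison with jump)
  costs one time unit.\<close>

datatype instr =
    Const nat complex
  | Add nat nat nat
  | Sub nat nat nat
  | Mul nat nat nat
  | Dvd nat nat nat
  | Cnj nat nat
  | Load nat nat
  | Store nat nat
  | JmpEq nat nat nat
  | JmpLe nat nat nat
  | Halt

type_synonym state = "nat \<times> (nat \<Rightarrow> complex)"

definition addr :: "complex \<Rightarrow> nat" where
  "addr v = nat \<lfloor>Re v\<rfloor>"

fun exec :: "instr \<Rightarrow> state \<Rightarrow> state" where
  "exec (Const i v) (pc, m) = (Suc pc, m(i := v))"
| "exec (Add i j l) (pc, m) = (Suc pc, m(i := m j + m l))"
| "exec (Sub i j l) (pc, m) = (Suc pc, m(i := m j - m l))"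
| "exec (Mul i j l) (pc, m) = (Suc pc, m(i := m j * m l))"
| "exec (Dvd i j l) (pc, m) = (Suc pc, m(i := m j / m l))"
| "exec (Cnj i j) (pc, m) = (Suc pc, m(i := cnj (m j)))"
| "exec (Load i j) (pc, m) = (Suc pc, m(i := m (addr (m j))))"
| "exec (Store i j) (pc, m) = (Suc pc, m(addr (m i) := m j))"
| "exec (JmpEq i j l) (pc, m) = (if m i = m j then l else Suc pc, m)"
| "exec (JmpLe i j l) (pc, m) = (if Re (m i) \<le> Re (m j) then l else Suc pc, m)"
| "exec Halt (pc, m) = (pc, m)"

definition halted :: "instr list \<Rightarrow> state \<Rightarrow> bool" where
  "halted P s \<longleftrightarrow> length P \<le> fst s \<or> P ! fst s = Halt"

definition step :: "instr list \<Rightarrow> state \<Rightarrow> state" where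
  "step P s = (if halted P s then s else exec (P ! fst s) s)"

definition run :: "instr list \<Rightarrow> state \<Rightarrow> nat \<Rightarrow> state" where
  "run P s t = (step P ^^ t) s"

definition word_index :: "nat \<Rightarrow> nat list \<Rightarrow> nat" where
  "word_index k w = foldl (\<lambda>acc a. acc * k + a) 0 w"

text \<open>Memory layout: m 0 = k, m 1 = r, m 2 = q, m (3+j) = N!j for j < r, and the table of
  delta: entry delta(w)(x) at address 3 + r + word_index k w * k + x. All other cells are 0.\<close>
definition init_mem :: "nat \<Rightarrow> nat \<Rightarrow> int list \<Rightarrow> (nat list \<Rightarrow> nat \<Rightarrow> complex) \<Rightarrow> nat \<Rightarrow> complex" where
  "init_mem k q N \<delta> a =
     (let r = length N in
      if a = 0 then of_nat k
      else if a = 1 then of_nat r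
      else if a = 2 then of_nat q
      else if a < 3 + r then of_int (N ! (a - 3))
      else if (\<exists>w \<in> words k r. \<exists>x<k. a = 3 + r + word_index k w * k + x)
        then (THE z. \<exists>w \<in> words k r. \<exists>x<k. a = 3 + r + word_index k w * k + x \<and> z = \<delta> w x)
      else 0)"

end

theory Submission
  imports Defs
begin

text \<open>Since \<open>U\<^sub>A(d, c)\<close> is a product of one factor per cell, summing \<open>\<bar>U\<^sub>A(d, c)\<bar>\<^sup>2\<close> over \<open>d\<close>
  factorizes: the squared norm of the column of \<open>c\<close> is the product of the weights
  \<open>\<parallel>\<delta>(w)\<parallel>\<^sup>2\<close> of the windows \<open>w\<close> of \<open>c\<close>, which for a simple neighbourhood are blocks of \<open>r\<close>
  consecutive cells. If these products are 1 for the \<open>k\<^sup>r\<close> configurations showing one word of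
  length \<open>r\<close> on a quiescent background, then every weight is a quotient
  \<open>g (tl w) / g (butlast w)\<close>, where \<open>g u\<close> is the product of the weights of the windows
  overhanging the left end of \<open>u\<close>, and the product for an arbitrary configuration telescopes
  to 1. A RAM program checks these \<open>k\<^sup>r\<close> products of \<open>2 r - 1\<close> weights each in
  \<open>O(k\<^sup>r r (r + k)) \<subseteq> O(n\<^sup>2)\<close> steps.\<close>

section \<open>Column norms as products of local weights\<close>

lemma sorted_wrt_less_nth_add:
  fixes xs :: "int list"
  assumes "sorted_wrt (<) xs" "i + d < length xs"
  shows "xs ! i + int d \<le> xs ! (i + d)"
  using assms(2)
proof (induction d)
  case (Suc d)
  have "xs ! (i + d) < xs ! (i + Suc d)"
    using assms(1) Suc.prems by (simp add: sorted_wrt_iff_nth_less)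
  then show ?case using Suc by simp
qed simp

lemma sorted_wrt_less_span_eq_upt:
  fixes N :: "int list"
  assumes "N \<noteq> []" "sorted_wrt (<) N" "last N - hd N = int (length N) - 1"
  shows "N = map (\<lambda>j. hd N + int j) [0..<length N]"
proof (rule nth_equalityI)
  fix j assume j: "j < length N"
  have "N ! 0 + int j \<le> N ! j"
    using sorted_wrt_less_nth_add[OF assms(2), of 0 j] j by simp
  moreover have "N ! j + int (length N - 1 - j) \<le> N ! (length N - 1)"
    using sorted_wrt_less_nth_add[OF assms(2), of j "length N - 1 - j"] j by simp
  ultimately have "N ! j = hd N + int j"
    using assms(1,3) j by (simp add: hd_conv_nth last_conv_nth of_nat_diff)
  then show "N ! j = map (\<lambda>j. hd N + int j) [0..<length N] ! j" using j by simp
qed simp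

definition weight :: "nat \<Rightarrow> (nat list \<Rightarrow> nat \<Rightarrow> complex) \<Rightarrow> nat list \<Rightarrow> real" where
  "weight k \<delta> w = (\<Sum>x<k. (cmod (\<delta> w x))\<^sup>2)"

definition window :: "nat \<Rightarrow> (int \<Rightarrow> nat) \<Rightarrow> int \<Rightarrow> nat list" where
  "window r c i = map (\<lambda>j. c (i + int j)) [0..<r]"

definition column_weight ::
  "nat \<Rightarrow> nat \<Rightarrow> nat \<Rightarrow> (nat list \<Rightarrow> nat \<Rightarrow> complex) \<Rightarrow> (int \<Rightarrow> nat) \<Rightarrow> real" where
  "column_weight k q r \<delta> c =
     (\<Prod>i \<in> {i. window r c i \<noteq> replicate r q}. weight k \<delta> (window r c i))"

definition word_config :: "nat \<Rightarrow> nat list \<Rightarrow> int \<Rightarrow> nat" where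
  "word_config q u i = (if 0 \<le> i \<and> i < int (length u) then u ! nat i else q)"

lemma nbh_eq_window:
  assumes "N = map (\<lambda>j. hd N + int j) [0..<length N]"
  shows "nbh N c i = window (length N) c (i + hd N)"
  unfolding nbh_def window_def by (subst assms) (simp add: algebra_simps)

lemma window_neq_replicate:
  assumes "window r c i \<noteq> replicate r q"
  obtains j where "j < r" "c (i + int j) \<noteq> q"
  using assms unfolding window_def by (auto simp: list_eq_iff_nth_eq)

lemma window_support_subset:
  assumes "\<And>i. i < lo \<or> hi \<le> i \<Longrightarrow> c i = q"
  shows "{i. window r c i \<noteq> replicate r q} \<subseteq> {lo - int r + 1..<hi}"
proof
  fix i assume "i \<in> {i. window r c i \<noteq> replicate r q}"
  then obtain j where "j < r" "c (i + int j) \<noteq> q"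
    using window_neq_replicate by blast
  moreover from this(2) have "lo \<le> i + int j" "i + int j < hi"
    using assms[of "i + int j"] by (meson not_le)+
  ultimately show "i \<in> {lo - int r + 1..<hi}" by auto
qed

lemma finite_window_support:
  assumes "finite {i. c i \<noteq> q}"
  shows "finite {i. window r c i \<noteq> replicate r q}"
proof -
  have "{i. window r c i \<noteq> replicate r q} \<subseteq> (\<Union>j<r. (\<lambda>x. x - int j) ` {i. c i \<noteq> q})"
  proof
    fix i assume "i \<in> {i. window r c i \<noteq> replicate r q}"
    then obtain j where "j < r" "c (i + int j) \<noteq> q" using window_neq_replicate by blast
    then show "i \<in> (\<Union>j<r. (\<lambda>x. x - int j) ` {i. c i \<noteq> q})"
      by (auto intro!: bexI[of _ j] image_eqI[of _ _ "i + int j"])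
  qed
  then show ?thesis by (rule finite_subset) (use assms in auto)
qed

lemma window_in_words: "(\<And>i. c i < k) \<Longrightarrow> window r c i \<in> words k r"
  unfolding window_def words_def by auto

lemma window_butlast: "butlast (window (Suc r) c i) = window r c i"
  unfolding window_def by (simp add: map_butlast[symmetric])

lemma window_tl: "tl (window (Suc r) c i) = window r c (i + 1)"
  unfolding window_def
  by (simp add: map_tl[symmetric] tl_upt map_Suc_upt[symmetric] del: upt_Suc)
     (simp add: algebra_simps)

lemma weight_replicate_quiescent:
  assumes "lqca k q N \<delta>"
  shows "weight k \<delta> (replicate (length N) q) = 1"
proof -
  have "q < k" and "\<forall>x<k. \<delta> (replicate (length N) q) x = (if x = q then 1 else 0)"
    using assms unfolding lqca_def by auto
  then have "weight k \<delta> (replicate (length N) q) = (\<Sum>x<k. if x = q then 1 else 0)"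
    unfolding weight_def by (intro sum.cong) auto
  then show ?thesis using \<open>q < k\<close> by simp
qed

lemma weight_pos:
  assumes "lqca k q N \<delta>" "w \<in> words k (length N)"
  shows "0 < weight k \<delta> w"
  using assms unfolding lqca_def weight_def by auto

lemma sum_mult_cnj_eq_weight: "(\<Sum>y<k. \<delta> v y * cnj (\<delta> v y)) = of_real (weight k \<delta> v)"
  unfolding weight_def of_real_sum by (simp add: complex_norm_square[symmetric])

lemma column_weight_eq_prod:
  assumes "finite I" "{i. window r c i \<noteq> replicate r q} \<subseteq> I"
    and "weight k \<delta> (replicate r q) = 1"
  shows "column_weight k q r \<delta> c = (\<Prod>i\<in>I. weight k \<delta> (window r c i))"
  unfolding column_weight_def by (rule prod.mono_neutral_left) (use assms in auto)

lemma column_weight_shift: "column_weight k q r \<delta> (\<lambda>i. c (i + s)) = column_weight k q r \<delta> c"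
proof -
  have "window r (\<lambda>i. c (i + s)) i = window r c (i + s)" for i
    unfolding window_def by (simp add: algebra_simps)
  then show ?thesis unfolding column_weight_def
    by (intro prod.reindex_bij_witness[of _ "\<lambda>j. j - s" "\<lambda>i. i + s"]) auto
qed

lemma sum_prod_over_configs:
  fixes f :: "int \<Rightarrow> nat \<Rightarrow> 'a :: comm_semiring_1"
  assumes "finite S" "q < k"
  shows "(\<Sum>d\<in>{d. (\<forall>i. d i < k) \<and> (\<forall>i. i \<notin> S \<longrightarrow> d i = q)}. \<Prod>i\<in>S. f i (d i))
       = (\<Prod>i\<in>S. \<Sum>y<k. f i (y))"
proof -
  let ?ext = "\<lambda>g i. if i \<in> S then g i else q"
  have "(\<Sum>d\<in>{d. (\<forall>i. d i < k) \<and> (\<forall>i. i \<notin> S \<longrightarrow> d i = q)}. \<Prod>i\<in>S. f i (d i))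
      = (\<Sum>g\<in>PiE S (\<lambda>_. {..<k}). \<Prod>i\<in>S. f i (g i))"
    using assms(2)
    by (intro sum.reindex_bij_witness[of _ ?ext "\<lambda>d. restrict d S"])
       (auto simp: PiE_iff extensional_def)
  also have "\<dots> = (\<Prod>i\<in>S. \<Sum>y<k. f i y)"
    by (rule prod_sum_PiE[symmetric]) (use assms in auto)
  finally show ?thesis .
qed

lemma finite_configs_supported:
  assumes "finite S"
  shows "finite {d :: int \<Rightarrow> nat. (\<forall>i. d i < k) \<and> (\<forall>i. i \<notin> S \<longrightarrow> d i = q)}"
proof -
  let ?ext = "\<lambda>g i. if i \<in> S then g i else q"
  have "{d. (\<forall>i. d i < k) \<and> (\<forall>i. i \<notin> S \<longrightarrow> d i = q)} \<subseteq> ?ext ` PiE S (\<lambda>_. {..<k})"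
  proof
    fix d assume d: "d \<in> {d. (\<forall>i. d i < k) \<and> (\<forall>i. i \<notin> S \<longrightarrow> d i = q)}"
    then have "d = ?ext (restrict d S)" by (auto simp: fun_eq_iff)
    moreover have "restrict d S \<in> PiE S (\<lambda>_. {..<k})" using d by auto
    ultimately show "d \<in> ?ext ` PiE S (\<lambda>_. {..<k})" by blast
  qed
  then show ?thesis by (rule finite_subset) (use assms in \<open>auto intro: finite_PiE\<close>)
qed

theorem column_norm_has_sum:
  assumes lq: "lqca k q N \<delta>" and N: "N = map (\<lambda>j. hd N + int j) [0..<length N]"
    and c: "c \<in> configs k q"
  shows "((\<lambda>d. (cmod (U q N \<delta> d c))\<^sup>2) has_sum column_weight k q (length N) \<delta> c) (configs k q)"
proof -
  define S where "S = {i. nbh N c i \<noteq> replicate (length N) q}"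
  define D where "D = {d. (\<forall>i. d i < k) \<and> (\<forall>i. i \<notin> S \<longrightarrow> d i = q)}"
  have qk: "q < k"
    and quiescent: "\<And>x. x < k \<Longrightarrow> \<delta> (replicate (length N) q) x = (if x = q then 1 else 0)"
    using lq unfolding lqca_def by auto
  have S_shift: "S = (\<lambda>i. i - hd N) ` {i. window (length N) c i \<noteq> replicate (length N) q}"
    unfolding S_def nbh_eq_window[OF N] by (auto simp: image_iff intro!: exI[of _ "_ + hd N"])
  have "finite S"
    unfolding S_shift using c by (auto simp: configs_def intro: finite_window_support)
  have "D \<subseteq> configs k q"
    unfolding D_def configs_def using \<open>finite S\<close> by (auto elim!: rev_finite_subset)
  have U_on_D: "U q N \<delta> d c = (\<Prod>i\<in>S. \<delta> (nbh N c i) (d i))" if "d \<in> D" for d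
  proof -
    have "{i. nbh N c i \<noteq> replicate (length N) q \<or> d i \<noteq> q} = S"
      using that unfolding D_def S_def by auto
    then show ?thesis unfolding U_def by simp
  qed
  have U_off_D: "U q N \<delta> d c = 0" if "d \<in> configs k q - D" for d
  proof -
    have "d \<notin> D" "\<forall>i. d i < k" using that unfolding configs_def by auto
    then obtain i where i: "i \<notin> S" "d i \<noteq> q" "d i < k" unfolding D_def by auto
    have "finite {i. nbh N c i \<noteq> replicate (length N) q \<or> d i \<noteq> q}"
      using that \<open>finite S\<close> unfolding configs_def S_def Collect_disj_eq by auto
    moreover have "\<delta> (nbh N c i) (d i) = 0" using i quiescent unfolding S_def by auto
    ultimately show ?thesis unfolding U_def using i by (intro prod_zero) auto
  qed
  have "(\<Sum>d\<in>D. (cmod (U q N \<delta> d c))\<^sup>2) = (\<Sum>d\<in>D. \<Prod>i\<in>S. (cmod (\<delta> (nbh N c i) (d i)))\<^sup>2)"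
    by (rule sum.cong) (simp_all add: U_on_D prod_norm[symmetric] prod_power_distrib)
  also have "\<dots> = (\<Prod>i\<in>S. weight k \<delta> (nbh N c i))"
    unfolding D_def weight_def by (rule sum_prod_over_configs[OF \<open>finite S\<close> qk])
  also have "\<dots> = column_weight k q (length N) \<delta> c"
    unfolding S_def column_weight_def nbh_eq_window[OF N]
    by (rule prod.reindex_bij_witness[of _ "\<lambda>j. j - hd N" "\<lambda>i. i + hd N"]) auto
  finally show ?thesis
    using finite_configs_supported[OF \<open>finite S\<close>] \<open>D \<subseteq> configs k q\<close> U_off_D
    by (intro has_sum_finite_neutralI[of D]) (auto simp: D_def)
qed

lemma word_config_outside: "i < 0 \<or> int (length u) \<le> i \<Longrightarrow> word_config q u i = q"
  unfolding word_config_def by auto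

lemma word_config_less:
  assumes "set u \<subseteq> {..<k}" "q < k"
  shows "word_config q u i < k"
proof (cases "0 \<le> i \<and> i < int (length u)")
  case True
  then have "u ! nat i \<in> set u" by (intro nth_mem) linarith
  then show ?thesis using assms True unfolding word_config_def by auto
qed (use assms in \<open>auto simp: word_config_def\<close>)

lemma word_config_in_configs:
  assumes "w \<in> words k r" "q < k"
  shows "word_config q w \<in> configs k q"
proof -
  have "{i. word_config q w i \<noteq> q} \<subseteq> {0..<int (length w)}"
    using word_config_outside[of _ w q]
    by (metis (mono_tags, lifting) atLeastLessThan_iff mem_Collect_eq not_le subsetI)
  then show ?thesis
    using assms word_config_less[of w k q] finite_subset unfolding configs_def words_def by auto
qed

lemma word_config_Cons_quiescent: "word_config q (q # u) = (\<lambda>i. word_config q u (i - 1))"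
proof
  fix i
  have "1 \<le> i \<Longrightarrow> (q # u) ! nat i = u ! nat (i - 1)"
    by (simp add: nat_diff_distrib)
  then show "word_config q (q # u) i = word_config q u (i - 1)"
    unfolding word_config_def by (cases "i = 0") auto
qed

lemma window_word_config_0: "length w = r \<Longrightarrow> window r (word_config q w) 0 = w"
  unfolding window_def word_config_def by (auto intro: nth_equalityI)

lemma window_word_config_butlast:
  "length w = r \<Longrightarrow> i < 0 \<Longrightarrow> window r (word_config q w) i = window r (word_config q (butlast w)) i"
  unfolding window_def word_config_def by (auto simp: nth_butlast nat_less_iff)

lemma window_word_config_tl:
  "length w = r \<Longrightarrow> 1 \<le> i \<Longrightarrow> window r (word_config q w) i = window r (word_config q (tl w)) (i - 1)"
  unfolding window_def word_config_def
  by (auto simp: nth_tl nat_diff_distrib algebra_simps nat_add_distrib)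

definition left_weight :: "nat \<Rightarrow> nat \<Rightarrow> nat \<Rightarrow> (nat list \<Rightarrow> nat \<Rightarrow> complex) \<Rightarrow> nat list \<Rightarrow> real" where
  "left_weight k q r \<delta> u = (\<Prod>i\<in>{- int (r - 1)..<0}. weight k \<delta> (window r (word_config q u) i))"

definition right_weight :: "nat \<Rightarrow> nat \<Rightarrow> nat \<Rightarrow> (nat list \<Rightarrow> nat \<Rightarrow> complex) \<Rightarrow> nat list \<Rightarrow> real" where
  "right_weight k q r \<delta> u = (\<Prod>i\<in>{0..<int (r - 1)}. weight k \<delta> (window r (word_config q u) i))"

lemma column_weight_word_config:
  assumes rep: "weight k \<delta> (replicate r q) = 1" and r: "1 \<le> r" and w: "length w = r"
  shows "column_weight k q r \<delta> (word_config q w)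
       = left_weight k q r \<delta> (butlast w) * weight k \<delta> w * right_weight k q r \<delta> (tl w)"
proof -
  let ?F = "\<lambda>i. weight k \<delta> (window r (word_config q w) i)"
  have "{i. window r (word_config q w) i \<noteq> replicate r q} \<subseteq> {- int (r - 1)..<int r}"
    using window_support_subset[of 0 "int r" "word_config q w" q r] word_config_outside[of _ w q] w r
    by force
  then have "column_weight k q r \<delta> (word_config q w) = (\<Prod>i\<in>{- int (r - 1)..<int r}. ?F i)"
    by (intro column_weight_eq_prod[OF _ _ rep]) auto
  also have "{- int (r - 1)..<int r} = {- int (r - 1)..<0} \<union> ({0} \<union> {1..<int r})" using r by auto
  also have "(\<Prod>i\<in>{- int (r - 1)..<0} \<union> ({0} \<union> {1..<int r}). ?F i)
      = (\<Prod>i\<in>{- int (r - 1)..<0}. ?F i) * (?F 0 * (\<Prod>i\<in>{1..<int r}. ?F i))"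
    by (subst prod.union_disjoint; simp)+
  also have "(\<Prod>i\<in>{- int (r - 1)..<0}. ?F i) = left_weight k q r \<delta> (butlast w)"
    unfolding left_weight_def by (rule prod.cong) (use window_word_config_butlast[OF w] in auto)
  also have "?F 0 = weight k \<delta> w" using window_word_config_0[OF w] by simp
  also have "(\<Prod>i\<in>{1..<int r}. ?F i) = right_weight k q r \<delta> (tl w)"
    unfolding right_weight_def using r window_word_config_tl[OF w]
    by (intro prod.reindex_bij_witness[of _ "\<lambda>j. j + 1" "\<lambda>i. i - 1"]) auto
  finally show ?thesis by (simp add: mult.assoc)
qed

lemma column_weight_word_config_short:
  assumes rep: "weight k \<delta> (replicate r q) = 1" and u: "length u = r - 1"
  shows "column_weight k q r \<delta> (word_config q u) = left_weight k q r \<delta> u * right_weight k q r \<delta> u"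
proof -
  have "{i. window r (word_config q u) i \<noteq> replicate r q} \<subseteq> {- int (r - 1)..<int (r - 1)}"
    using window_support_subset[of 0 "int (r - 1)" "word_config q u" q r]
      word_config_outside[of _ u q] u by force
  then have "column_weight k q r \<delta> (word_config q u)
      = (\<Prod>i\<in>{- int (r - 1)..<0} \<union> {0..<int (r - 1)}. weight k \<delta> (window r (word_config q u) i))"
    by (intro column_weight_eq_prod[OF _ _ rep]) (auto simp: ivl_disj_un)
  then show ?thesis unfolding left_weight_def right_weight_def
    by (subst (asm) prod.union_disjoint) auto
qed

lemma left_weight_pos:
  assumes "lqca k q N \<delta>" "set u \<subseteq> {..<k}"
  shows "0 < left_weight k q (length N) \<delta> u"
proof -
  have "q < k" using assms(1) unfolding lqca_def by auto
  then show ?thesis unfolding left_weight_def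
    using assms word_config_less window_in_words weight_pos by (metis prod_pos)
qed

lemma prod_int_telescope:
  fixes g :: "int \<Rightarrow> 'a :: field"
  assumes "a \<le> b" "\<And>i. g i \<noteq> 0"
  shows "(\<Prod>i\<in>{a..<b}. g (i + 1) / g i) = g b / g a"
proof -
  obtain n where b: "b = a + int n" using assms(1) zle_iff_zadd by blast
  have "(\<Prod>i\<in>{a..<a + int n}. g (i + 1) / g i) = g (a + int n) / g a"
  proof (induction n)
    case (Suc n)
    have "{a..<a + int (Suc n)} = insert (a + int n) {a..<a + int n}" by auto
    then show ?case using Suc assms(2) by (simp add: algebra_simps)
  qed (use assms(2) in simp)
  then show ?thesis unfolding b .
qed


lemma weight_eq_left_weight_quotient:
  assumes lq: "lqca k q N \<delta>" and r: "length N = Suc r"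
    and unit: "\<forall>w\<in>words k (length N). column_weight k q (length N) \<delta> (word_config q w) = 1"
    and w: "w \<in> words k (length N)"
  shows "weight k \<delta> w
       = left_weight k q (length N) \<delta> (tl w) / left_weight k q (length N) \<delta> (butlast w)"
proof -
  let ?L = "left_weight k q (length N) \<delta>" and ?R = "right_weight k q (length N) \<delta>"
  have qk: "q < k" using lq unfolding lqca_def by auto
  have rep: "weight k \<delta> (replicate (length N) q) = 1" by (rule weight_replicate_quiescent[OF lq])
  have w': "set (tl w) \<subseteq> {..<k}" "set (butlast w) \<subseteq> {..<k}" "length (tl w) = r"
    using w r unfolding words_def by (auto dest: in_set_butlastD list.set_sel(2)[rotated])
  have "?L (tl w) * ?R (tl w) = column_weight k q (length N) \<delta> (word_config q (tl w))"
    using column_weight_word_config_short[OF rep] w' r by simp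
  also have "\<dots> = column_weight k q (length N) \<delta> (word_config q (q # tl w))"
    using column_weight_shift[of k q "length N" \<delta> "word_config q (tl w)" "-1"]
    by (simp add: word_config_Cons_quiescent)
  also have "\<dots> = 1" using unit qk w' r unfolding words_def by auto
  finally have "?R (tl w) = 1 / ?L (tl w)"
    using left_weight_pos[OF lq w'(1)] by (simp add: eq_divide_eq mult.commute)
  moreover have "?L (butlast w) * weight k \<delta> w * ?R (tl w) = 1"
    using column_weight_word_config[OF rep] unit w r unfolding words_def by auto
  ultimately have "?L (butlast w) * weight k \<delta> w * (1 / ?L (tl w)) = 1" by (simp only:)
  then show ?thesis
    using left_weight_pos[OF lq w'(1)] left_weight_pos[OF lq w'(2)] by (simp add: field_simps)
qed

lemma column_weight_telescope:
  assumes rep: "weight k \<delta> (replicate (Suc r) q) = 1"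
    and quotient: "\<And>w. w \<in> words k (Suc r) \<Longrightarrow> weight k \<delta> w = g (tl w) / g (butlast w)"
    and nonzero: "\<And>u. u \<in> words k r \<Longrightarrow> g u \<noteq> 0"
    and c: "c \<in> configs k q"
  shows "column_weight k q (Suc r) \<delta> c = 1"
proof -
  have ck: "\<And>i. c i < k" using c by (auto simp: configs_def)
  obtain M where M: "abs ` {i. c i \<noteq> q} \<subseteq> {..<M}" "0 \<le> M"
  proof -
    obtain M0 where "abs ` {i. c i \<noteq> q} \<subseteq> {..<M0}"
      using c unfolding configs_def finite_int_iff_bounded by auto
    then show ?thesis by (intro that[of "max M0 0"]) auto
  qed
  have outside: "c i = q" if "i < - M \<or> M \<le> i" for i using M that by force
  let ?g = "\<lambda>i. g (window r c i)"
  have g_nonzero: "?g i \<noteq> 0" for i using nonzero window_in_words ck by blast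
  have "{i. window (Suc r) c i \<noteq> replicate (Suc r) q} \<subseteq> {- M - int r..<M}"
    using window_support_subset[of "-M" M c q "Suc r"] outside by auto
  then have "column_weight k q (Suc r) \<delta> c = (\<Prod>i\<in>{- M - int r..<M}. weight k \<delta> (window (Suc r) c i))"
    by (intro column_weight_eq_prod[OF _ _ rep]) auto
  also have "\<dots> = (\<Prod>i\<in>{- M - int r..<M}. ?g (i + 1) / ?g i)"
    using quotient[OF window_in_words[OF ck]] by (simp add: window_tl window_butlast)
  also have "\<dots> = ?g M / ?g (- M - int r)"
    using M(2) g_nonzero by (intro prod_int_telescope) auto
  also have "\<dots> = 1"
  proof -
    have "window r c M = replicate r q" "window r c (- M - int r) = replicate r q"
      unfolding window_def using outside by (auto intro: nth_equalityI)
    then show ?thesis using g_nonzero[of M] by simp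
  qed
  finally show ?thesis .
qed

lemma column_weight_one_iff_word_configs:
  assumes lq: "lqca k q N \<delta>"
  shows "(\<forall>c\<in>configs k q. column_weight k q (length N) \<delta> c = 1)
     \<longleftrightarrow> (\<forall>w\<in>words k (length N). column_weight k q (length N) \<delta> (word_config q w) = 1)"
proof
  have "q < k" using lq unfolding lqca_def by auto
  then show "\<forall>c\<in>configs k q. column_weight k q (length N) \<delta> c = 1 \<Longrightarrow>
      \<forall>w\<in>words k (length N). column_weight k q (length N) \<delta> (word_config q w) = 1"
    using word_config_in_configs by blast
next
  assume unit: "\<forall>w\<in>words k (length N). column_weight k q (length N) \<delta> (word_config q w) = 1"
  obtain r where r: "length N = Suc r" using lq unfolding lqca_def by (cases N) auto
  have "weight k \<delta> (replicate (Suc r) q) = 1"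
    using weight_replicate_quiescent[OF lq] r by simp
  moreover have "weight k \<delta> w
      = left_weight k q (Suc r) \<delta> (tl w) / left_weight k q (Suc r) \<delta> (butlast w)"
    if "w \<in> words k (Suc r)" for w
    using weight_eq_left_weight_quotient[OF lq r unit] that r by simp
  moreover have "left_weight k q (Suc r) \<delta> u \<noteq> 0" if "u \<in> words k r" for u
    using left_weight_pos[OF lq, of u] that r unfolding words_def by simp
  ultimately have "column_weight k q (Suc r) \<delta> c = 1" if "c \<in> configs k q" for c
    using that by (rule column_weight_telescope)
  then show "\<forall>c\<in>configs k q. column_weight k q (length N) \<delta> c = 1"
    unfolding r by blast
qed

definition padded :: "nat \<Rightarrow> nat \<Rightarrow> nat list \<Rightarrow> nat list" where
  "padded q r w = replicate (r - 1) q @ w @ replicate (r - 1) q"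

definition word_weight :: "nat \<Rightarrow> nat \<Rightarrow> nat \<Rightarrow> (nat list \<Rightarrow> nat \<Rightarrow> complex) \<Rightarrow> nat list \<Rightarrow> real" where
  "word_weight k q r \<delta> w = (\<Prod>j<2 * r - 1. weight k \<delta> (take r (drop j (padded q r w))))"

lemma length_padded: "length w = r \<Longrightarrow> 1 \<le> r \<Longrightarrow> length (padded q r w) = 3 * r - 2"
  unfolding padded_def by simp

lemma padded_in_words: "u \<in> words k r \<Longrightarrow> q < k \<Longrightarrow> set (padded q r u) \<subseteq> {..<k}"
  unfolding padded_def words_def by auto

lemma padded_list_update:
  assumes "length u = r" "i < r"
  shows "padded q r (u[i := d]) = (padded q r u)[r - 1 + i := d]"
proof -
  have "\<not> r - 1 + i < r - 1" by simp
  then show ?thesis using assms unfolding padded_def by (simp add: list_update_append)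
qed

lemma window_word_config_eq_padded:
  assumes w: "length w = r" and j: "j < 2 * r - 1"
  shows "window r (word_config q w) (int j - int (r - 1)) = take r (drop j (padded q r w))"
proof (rule nth_equalityI)
  have r: "1 \<le> r" using j by simp
  show "length (window r (word_config q w) (int j - int (r - 1))) = length (take r (drop j (padded q r w)))"
    using j length_padded[OF w r] unfolding window_def by simp
  fix t assume "t < length (window r (word_config q w) (int j - int (r - 1)))"
  then have t: "t < r" unfolding window_def by simp
  have "take r (drop j (padded q r w)) ! t = padded q r w ! (j + t)"
    using t j length_padded[OF w r] by simp
  also have "\<dots> = word_config q w (int j - int (r - 1) + int t)"
  proof -
    have "j + t \<ge> r - 1 \<Longrightarrow> nat (int j - int (r - 1) + int t) = j + t - (r - 1)" by simp
    then show ?thesis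
      using w j t unfolding padded_def word_config_def by (auto simp: nth_append)
  qed
  finally show "window r (word_config q w) (int j - int (r - 1)) ! t = take r (drop j (padded q r w)) ! t"
    unfolding window_def using t by simp
qed

lemma column_weight_word_config_eq_word_weight:
  assumes rep: "weight k \<delta> (replicate r q) = 1" and r: "1 \<le> r" and w: "length w = r"
  shows "column_weight k q r \<delta> (word_config q w) = word_weight k q r \<delta> w"
proof -
  have "{i. window r (word_config q w) i \<noteq> replicate r q} \<subseteq> {- int (r - 1)..<int r}"
    using window_support_subset[of 0 "int r" "word_config q w" q r] word_config_outside[of _ w q] w r
    by force
  then have "column_weight k q r \<delta> (word_config q w)
      = (\<Prod>i\<in>{- int (r - 1)..<int r}. weight k \<delta> (window r (word_config q w) i))"
    by (intro column_weight_eq_prod[OF _ _ rep]) auto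
  also have "\<dots> = (\<Prod>j<2 * r - 1. weight k \<delta> (window r (word_config q w) (int j - int (r - 1))))"
    using r by (intro prod.reindex_bij_witness[of _ "\<lambda>i. int i - int (r - 1)" "\<lambda>i. nat (i + int (r - 1))"])
      auto
  also have "\<dots> = word_weight k q r \<delta> w"
    unfolding word_weight_def by (rule prod.cong) (use window_word_config_eq_padded[OF w] in auto)
  finally show ?thesis .
qed

theorem all_columns_unit_iff_word_weight:
  assumes "simple_lqca k q N \<delta>"
  shows "all_columns_unit k q N \<delta> \<longleftrightarrow> (\<forall>w\<in>words k (length N). word_weight k q (length N) \<delta> w = 1)"
proof -
  have lq: "lqca k q N \<delta>" using assms unfolding simple_lqca_def by auto
  have N: "N = map (\<lambda>j. hd N + int j) [0..<length N]"
    using assms sorted_wrt_less_span_eq_upt unfolding simple_lqca_def lqca_def by auto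
  have r: "1 \<le> length N" using lq unfolding lqca_def by (cases N) auto
  have "all_columns_unit k q N \<delta> \<longleftrightarrow> (\<forall>c\<in>configs k q. column_weight k q (length N) \<delta> c = 1)"
    unfolding all_columns_unit_def using column_norm_has_sum[OF lq N] has_sum_unique by metis
  also have "\<dots> \<longleftrightarrow> (\<forall>w\<in>words k (length N). column_weight k q (length N) \<delta> (word_config q w) = 1)"
    by (rule column_weight_one_iff_word_configs[OF lq])
  also have "\<dots> \<longleftrightarrow> (\<forall>w\<in>words k (length N). word_weight k q (length N) \<delta> w = 1)"
    using column_weight_word_config_eq_word_weight[OF weight_replicate_quiescent[OF lq] r]
    unfolding words_def by simp
  finally show ?thesis .
qed

lemma all_columns_unit_unary:
  assumes "simple_lqca 1 q N \<delta>"
  shows "all_columns_unit 1 q N \<delta>"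
proof -
  have lq: "lqca 1 q N \<delta>" using assms unfolding simple_lqca_def by auto
  then have "q = 0" "1 \<le> length N" unfolding lqca_def by (auto simp: Suc_leI)
  have "word_weight 1 q (length N) \<delta> w = 1" if "w \<in> words 1 (length N)" for w
  proof -
    have "w = replicate (length N) q"
      using that \<open>q = 0\<close> unfolding words_def by (auto intro: replicate_eqI)
    then have pad: "padded q (length N) w = replicate (3 * length N - 2) q"
      using \<open>1 \<le> length N\<close> unfolding padded_def by (simp add: replicate_add[symmetric])
    then have "take (length N) (drop j (padded q (length N) w)) = replicate (length N) q"
      if "j < 2 * length N - 1" for j
    proof -
      have "length N \<le> 3 * length N - 2 - j" using that by simp
      then show ?thesis using pad by (simp add: min_def)
    qed
    then show ?thesis
      unfolding word_weight_def using weight_replicate_quiescent[OF lq] by simp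
  qed
  then show ?thesis using all_columns_unit_iff_word_weight[OF assms] by blast
qed

section \<open>Reasoning about program runs\<close>

lemma run_Suc: "run P s (Suc t) = run P (step P s) t"
  unfolding run_def funpow_Suc_right by simp

lemma run_add: "run P s (a + b) = run P (run P s a) b"
  unfolding run_def by (metis add.commute comp_apply funpow_add)

definition reach :: "instr list \<Rightarrow> state \<Rightarrow> (state \<Rightarrow> bool) \<Rightarrow> nat \<Rightarrow> bool" where
  "reach P s Q B \<longleftrightarrow> (\<exists>t\<le>B. Q (run P s t))"

lemma reach_now: "Q s \<Longrightarrow> reach P s Q B"
  unfolding reach_def by (rule exI[of _ 0]) (simp add: run_def)

lemma reach_step: "reach P (step P s) Q B \<Longrightarrow> reach P s Q (Suc B)"
  unfolding reach_def by (metis Suc_le_mono run_Suc)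

lemma reach_step_numeral: "reach P (step P s) Q (pred_numeral n) \<Longrightarrow> reach P s Q (numeral n)"
  using reach_step[of P s Q "pred_numeral n"] by (simp add: numeral_eq_Suc)

lemma reach_step_one: "reach P (step P s) Q 0 \<Longrightarrow> reach P s Q 1"
  using reach_step[of P s Q 0] by simp

lemmas reach_stepI = reach_step reach_step_numeral reach_step_one

lemma reach_mono: "reach P s Q B \<Longrightarrow> B \<le> B' \<Longrightarrow> (\<And>s. Q s \<Longrightarrow> Q' s) \<Longrightarrow> reach P s Q' B'"
  unfolding reach_def by (meson order_trans)

lemma reach_seq:
  "reach P s Q1 B1 \<Longrightarrow> (\<And>s'. Q1 s' \<Longrightarrow> reach P s' Q2 B2) \<Longrightarrow> reach P s Q2 (B1 + B2)"
  unfolding reach_def by (metis add_le_mono run_add)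

lemma reach_seq_at:
  assumes "reach P s (\<lambda>s. fst s = L \<and> R (snd s)) B1" "\<And>m. R m \<Longrightarrow> reach P (L, m) Q B2"
  shows "reach P s Q (B1 + B2)"
proof (rule reach_seq[OF assms(1)])
  fix s' assume "fst s' = L \<and> R (snd s')"
  then show "reach P s' Q B2" using assms(2)[of "snd s'"] by (cases s') simp
qed

lemma reach_loop:
  assumes body: "\<And>i m. i < n \<Longrightarrow> I i m \<Longrightarrow> reach P (L, m) (\<lambda>s. fst s = L \<and> I (Suc i) (snd s) \<or> Q s) c"
    and exit: "\<And>m. I n m \<Longrightarrow> reach P (L, m) Q d"
    and start: "I 0 m"
  shows "reach P (L, m) Q (n * c + d)"
proof -
  have "reach P (L, m) Q ((n - i) * c + d)" if "I i m" "i \<le> n" for i m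
    using that
  proof (induction "n - i" arbitrary: i m)
    case 0
    then have "i = n" by simp
    then show ?case using exit 0 by simp
  next
    case (Suc x)
    then have i: "i < n" by simp
    have "reach P (L, m) Q (c + (x * c + d))"
    proof (rule reach_seq[OF body[OF i Suc.prems(1)]])
      fix s' assume "fst s' = L \<and> I (Suc i) (snd s') \<or> Q s'"
      then show "reach P s' Q (x * c + d)"
      proof
        assume s': "fst s' = L \<and> I (Suc i) (snd s')"
        have "reach P (L, snd s') Q ((n - Suc i) * c + d)"
          by (rule Suc.hyps(1)) (use Suc.hyps(2) s' i in auto)
        moreover have "n - Suc i = x" using Suc.hyps(2) by simp
        ultimately show ?thesis using s' by (cases s') simp
      qed (rule reach_now)
    qed
    moreover have "(n - i) * c + d = c + (x * c + d)" by (simp add: Suc.hyps(2)[symmetric])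
    ultimately show ?case by (metis add.assoc)
  qed
  from this[OF start] show ?thesis by simp
qed

lemma reach_loop_simple:
  assumes "\<And>i m. i < n \<Longrightarrow> I i m \<Longrightarrow> reach P (L, m) (\<lambda>s. fst s = L \<and> I (Suc i) (snd s)) c"
    and "\<And>m. I n m \<Longrightarrow> reach P (L, m) Q d" and "I 0 m"
  shows "reach P (L, m) Q (n * c + d)"
proof (rule reach_loop[where I = I])
  fix i m assume "i < n" "I i m"
  from assms(1)[OF this] show "reach P (L, m) (\<lambda>s. fst s = L \<and> I (Suc i) (snd s) \<or> Q s) c"
    by (rule reach_mono) auto
qed (use assms(2,3) in auto)

lemma addr_of_nat [simp]: "addr (of_nat n) = n"
  unfolding addr_def by simp

lemma addr_add_of_nat [simp]: "0 \<le> Re x \<Longrightarrow> addr (x + of_nat b) = addr x + b"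
  unfolding addr_def by (simp add: nat_add_distrib)

lemma addr_add_one [simp]: "0 \<le> Re x \<Longrightarrow> addr (x + 1) = addr x + 1"
  using addr_add_of_nat[of x 1] by simp

lemma addr_numeral_mult [simp]: "addr (numeral a * of_nat b) = numeral a * b"
proof -
  have "numeral a * (of_nat b :: complex) = of_nat (numeral a * b)" by simp
  then show ?thesis by (simp only: addr_of_nat)
qed

lemma addr_divide_of_nat: "0 < k \<Longrightarrow> addr (of_nat x / of_nat k + of_nat b) = x div k + b"
proof -
  have "Re (of_nat x / of_nat k + of_nat b) = real x / real k + real b"
    by (simp add: Re_divide_of_nat)
  moreover have "\<lfloor>real x / real k + real b\<rfloor> = int (x div k) + int b"
    by (simp add: floor_divide_of_nat_eq)
  ultimately show ?thesis unfolding addr_def by simp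
qed

lemma of_nat_minus_div_mult: "(of_nat x :: 'a :: ring_1) - of_nat (x div k) * of_nat k = of_nat (x mod k)"
  by (metis add_diff_cancel_left' div_mult_mod_eq of_nat_add of_nat_mult)

definition unchanged_outside :: "nat set \<Rightarrow> (nat \<Rightarrow> complex) \<Rightarrow> (nat \<Rightarrow> complex) \<Rightarrow> bool" where
  "unchanged_outside A m m' \<longleftrightarrow> (\<forall>a. a \<notin> A \<longrightarrow> m' a = m a)"

lemma unchanged_outside_refl: "unchanged_outside A m m"
  unfolding unchanged_outside_def by auto

lemma unchanged_outside_trans:
  "unchanged_outside A m m' \<Longrightarrow> unchanged_outside B m' m'' \<Longrightarrow> A \<union> B \<subseteq> C \<Longrightarrow> unchanged_outside C m m''"
  unfolding unchanged_outside_def by (metis UnCI subsetD)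

section \<open>Words as base-\<open>k\<close> numbers\<close>

lemma word_index_Nil [simp]: "word_index k [] = 0"
  unfolding word_index_def by simp

lemma word_index_snoc: "word_index k (xs @ [a]) = word_index k xs * k + a"
  unfolding word_index_def by simp

lemma word_index_less: "w \<in> words k t \<Longrightarrow> word_index k w < k ^ t"
proof (induction w arbitrary: t rule: rev_induct)
  case (snoc a w)
  then obtain t' where t: "t = Suc t'" "w \<in> words k t'" "a < k"
    unfolding words_def by (cases t) auto
  then have "word_index k w + 1 \<le> k ^ t'" using snoc by (simp add: Suc_le_eq)
  then have "(word_index k w + 1) * k \<le> k ^ t' * k" by (rule mult_right_mono) simp
  then show ?case using t by (simp add: word_index_snoc algebra_simps)
qed (simp add: words_def)

lemma table_index_less:
  assumes "w \<in> words k r" "x < k"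
  shows "word_index k w * k + x < k ^ (r + 1)"
proof -
  have "word_index k w + 1 \<le> k ^ r" using word_index_less[OF assms(1)] by simp
  then have "(word_index k w + 1) * k \<le> k ^ r * k" by (rule mult_right_mono) simp
  then show ?thesis using assms(2) by (simp add: algebra_simps)
qed

fun digits :: "nat \<Rightarrow> nat \<Rightarrow> nat \<Rightarrow> nat list" where
  "digits k 0 n = []"
| "digits k (Suc t) n = digits k t (n div k) @ [n mod k]"

lemma length_digits [simp]: "length (digits k t n) = t"
  by (induction t arbitrary: n) auto

lemma digits_Suc_Cons: "digits k (Suc t) n = (n div k ^ t mod k) # digits k t n"
proof (induction t arbitrary: n)
  case (Suc t)
  have "n div k div k ^ t = n div k ^ Suc t" by (simp add: div_mult2_eq)
  then show ?case using Suc[of "n div k"] by simp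
qed simp

lemma digits_in_words: "0 < k \<Longrightarrow> digits k t n \<in> words k t"
proof -
  assume "0 < k"
  then have "set (digits k t n) \<subseteq> {..<k}" by (induction t arbitrary: n) auto
  then show ?thesis unfolding words_def by simp
qed

lemma digits_word_index: "w \<in> words k t \<Longrightarrow> digits k t (word_index k w) = w"
proof (induction w arbitrary: t rule: rev_induct)
  case (snoc a w)
  then obtain t' where t: "t = Suc t'" "w \<in> words k t'" "a < k"
    unfolding words_def by (cases t) auto
  moreover have "(word_index k w * k + a) div k = word_index k w" "(word_index k w * k + a) mod k = a"
    using t(3) by auto
  ultimately show ?case using snoc by (simp add: word_index_snoc)
qed (simp add: words_def)

lemma digits_list_update:
  assumes "t < r" "length u = r"
  shows "(take (r - t) u @ digits k t n)[r - 1 - t := n div k ^ t mod k] = take (r - Suc t) u @ digits k (Suc t) n"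
proof -
  have "take (r - t) u = take (r - Suc t) u @ [u ! (r - Suc t)]"
    using assms by (simp add: take_Suc_conv_app_nth Suc_diff_Suc[symmetric])
  then show ?thesis using assms by (simp add: list_update_append digits_Suc_Cons del: digits.simps(2))
qed

lemma all_digits_iff_all_words:
  assumes "0 < k"
  shows "(\<forall>n<k ^ t. P (digits k t n)) \<longleftrightarrow> (\<forall>w\<in>words k t. P w)"
proof
  assume "\<forall>n<k ^ t. P (digits k t n)"
  then show "\<forall>w\<in>words k t. P w" by (metis digits_word_index word_index_less)
qed (use digits_in_words[OF assms] in blast)

section \<open>The decision program\<close>

text \<open>Let \<open>E = 3 + r + k\<^sup>r\<^sup>+\<^sup>1\<close>, which exceeds every input address.
  \<^item> pc 0--25: accept at once if \<open>k = 1\<close>; otherwise compute \<open>k\<^sup>r\<^sup>+\<^sup>1\<close> and \<open>E\<close>, keeping \<open>q\<close> as the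
    imaginary part of register 1, since only registers 0--3 may be overwritten before the input
    is saved.
  \<^item> pc 26--43: save \<open>k + i q\<close> and \<open>k\<^sup>r\<^sup>+\<^sup>1\<close> at \<open>65 E\<close> and \<open>65 E + 1\<close> and copy the table of \<open>\<delta>\<close>
    from \<open>3 + r\<close> to \<open>64 E + 3 + r\<close>, freeing the registers below 32.
  \<^item> pc 44--89: load constants into the registers, write the identity table \<open>a \<mapsto> a\<close>
    (\<open>a < k\<^sup>r\<close>) at \<open>66 E\<close>, which turns a load from address \<open>x / k\<close> into integer division, and
    the word \<open>q\<^sup>3\<^sup>r\<^sup>-\<^sup>2\<close> at \<open>67 E\<close>.
  \<^item> pc 90--138: for each \<open>n < k\<^sup>r\<close> write the digits of \<open>n\<close> into the middle of that word and
    multiply the weights of its \<open>2 r - 1\<close> windows of length \<open>r\<close>; reject if the product is not 1.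
  \<^item> pc 139--140: accept.\<close>

definition prog :: "instr list" where
  "prog = [
    Dvd 3 0 0, JmpEq 0 3 139,
    Const 3 \<i>, Mul 3 3 2, Add 1 1 3,
    Const 2 1, Const 3 0,
    JmpLe 3 1 9, JmpEq 0 0 14, Mul 2 2 0, Mul 3 3 0, Add 3 3 0, Dvd 3 3 0, JmpEq 0 0 7,
    Sub 1 1 3, Add 1 1 0, Mul 1 1 0, Add 1 1 0, Dvd 1 1 0,
    Add 3 3 2, Mul 3 3 2, Add 3 3 2, Dvd 3 3 2, Mul 3 3 2, Add 3 3 2, Dvd 3 3 2,
    Const 0 65, Mul 0 0 3, Store 0 1, Mul 0 0 3, Add 0 0 3, Dvd 0 0 3, Store 0 2, Sub 2 3 2,
    JmpLe 3 2 44, Load 0 2, Const 1 64, Mul 1 1 3, Add 1 1 2, Store 1 0, Mul 2 2 3, Add 2 2 3, Dvd 2 2 3, JmpEq 0 0 34,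
    Const 5 0, Const 6 1, Add 7 3 5, Const 0 65, Mul 0 0 7, Load 1 0, Add 0 0 6, Load 10 0,
    Cnj 2 1, Add 2 2 1, Const 3 2, Dvd 8 2 3, Cnj 2 1, Sub 2 1 2, Const 3 (2 * \<i>), Dvd 9 2 3,
    Const 3 3, Sub 11 7 3, Sub 11 11 10, Const 3 64, Mul 12 3 7, Sub 2 7 10, Add 12 12 2, Const 3 66, Mul 13 3 7, Const 3 67, Mul 14 3 7,
    Dvd 15 10 8, Sub 18 11 6, Add 16 11 11, Add 16 16 18, Sub 16 16 6, Add 17 11 18,
    Const 19 0, JmpLe 15 19 83, Add 2 13 19, Store 2 19, Add 19 19 6, JmpEq 0 0 78,
    Const 19 0, JmpLe 16 19 89, Add 2 14 19, Store 2 9, Add 19 19 6, JmpEq 0 0 84,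
    Const 19 0,
    JmpLe 15 19 139, Add 20 19 5, Add 21 14 17, Sub 21 21 6, Const 22 0,
    JmpLe 11 22 106, Dvd 2 20 8, Add 2 2 13, Load 23 2, Mul 2 23 8, Sub 2 20 2, Store 21 2, Add 20 23 5, Sub 21 21 6, Add 22 22 6, JmpEq 0 0 95,
    Add 25 6 5, Const 26 0,
    JmpLe 17 26 134, Const 27 0, Const 28 0, Add 24 14 26,
    JmpLe 11 28 119, Load 2 24, Mul 27 27 8, Add 27 27 2, Add 24 24 6, Add 28 28 6, JmpEq 0 0 112,
    Mul 31 27 8, Add 31 31 12, Const 29 0, Const 30 0,
    JmpLe 8 30 131, Add 2 31 30, Load 2 2, Cnj 3 2, Mul 2 2 3, Add 29 29 2, Add 30 30 6, JmpEq 0 0 123,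
    Mul 25 25 29, Add 26 26 6, JmpEq 0 0 108,
    JmpEq 25 6 137, Const 0 0, Halt,
    Add 19 19 6, JmpEq 0 0 90,
    Const 0 1, Halt]"

lemma prog_length: "length prog = 141"
  by (simp add: prog_def)

lemma prog_nth:
    "prog ! 0 = Dvd 3 0 0"
    "prog ! 1 = JmpEq 0 3 139"
    "prog ! 2 = Const 3 \<i>"
    "prog ! 3 = Mul 3 3 2"
    "prog ! 4 = Add 1 1 3"
    "prog ! 5 = Const 2 1"
    "prog ! 6 = Const 3 0"
    "prog ! 7 = JmpLe 3 1 9"
    "prog ! 8 = JmpEq 0 0 14"
    "prog ! 9 = Mul 2 2 0"
    "prog ! 10 = Mul 3 3 0"
    "prog ! 11 = Add 3 3 0"
    "prog ! 12 = Dvd 3 3 0"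
    "prog ! 13 = JmpEq 0 0 7"
    "prog ! 14 = Sub 1 1 3"
    "prog ! 15 = Add 1 1 0"
    "prog ! 16 = Mul 1 1 0"
    "prog ! 17 = Add 1 1 0"
    "prog ! 18 = Dvd 1 1 0"
    "prog ! 19 = Add 3 3 2"
    "prog ! 20 = Mul 3 3 2"
    "prog ! 21 = Add 3 3 2"
    "prog ! 22 = Dvd 3 3 2"
    "prog ! 23 = Mul 3 3 2"
    "prog ! 24 = Add 3 3 2"
    "prog ! 25 = Dvd 3 3 2"
    "prog ! 26 = Const 0 65"
    "prog ! 27 = Mul 0 0 3"
    "prog ! 28 = Store 0 1"
    "prog ! 29 = Mul 0 0 3"
    "prog ! 30 = Add 0 0 3"
    "prog ! 31 = Dvd 0 0 3"
    "prog ! 32 = Store 0 2"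
    "prog ! 33 = Sub 2 3 2"
    "prog ! 34 = JmpLe 3 2 44"
    "prog ! 35 = Load 0 2"
    "prog ! 36 = Const 1 64"
    "prog ! 37 = Mul 1 1 3"
    "prog ! 38 = Add 1 1 2"
    "prog ! 39 = Store 1 0"
    "prog ! 40 = Mul 2 2 3"
    "prog ! 41 = Add 2 2 3"
    "prog ! 42 = Dvd 2 2 3"
    "prog ! 43 = JmpEq 0 0 34"
    "prog ! 44 = Const 5 0"
    "prog ! 45 = Const 6 1"
    "prog ! 46 = Add 7 3 5"
    "prog ! 47 = Const 0 65"
    "prog ! 48 = Mul 0 0 7"
    "prog ! 49 = Load 1 0"
    "prog ! 50 = Add 0 0 6"
    "prog ! 51 = Load 10 0"
    "prog ! 52 = Cnj 2 1"
    "prog ! 53 = Add 2 2 1"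
    "prog ! 54 = Const 3 2"
    "prog ! 55 = Dvd 8 2 3"
    "prog ! 56 = Cnj 2 1"
    "prog ! 57 = Sub 2 1 2"
    "prog ! 58 = Const 3 (2 * \<i>)"
    "prog ! 59 = Dvd 9 2 3"
    "prog ! 60 = Const 3 3"
    "prog ! 61 = Sub 11 7 3"
    "prog ! 62 = Sub 11 11 10"
    "prog ! 63 = Const 3 64"
    "prog ! 64 = Mul 12 3 7"
    "prog ! 65 = Sub 2 7 10"
    "prog ! 66 = Add 12 12 2"
    "prog ! 67 = Const 3 66"
    "prog ! 68 = Mul 13 3 7"
    "prog ! 69 = Const 3 67"
    "prog ! 70 = Mul 14 3 7"
    "prog ! 71 = Dvd 15 10 8"
    "prog ! 72 = Sub 18 11 6"
    "prog ! 73 = Add 16 11 11"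
    "prog ! 74 = Add 16 16 18"
    "prog ! 75 = Sub 16 16 6"
    "prog ! 76 = Add 17 11 18"
    "prog ! 77 = Const 19 0"
    "prog ! 78 = JmpLe 15 19 83"
    "prog ! 79 = Add 2 13 19"
    "prog ! 80 = Store 2 19"
    "prog ! 81 = Add 19 19 6"
    "prog ! 82 = JmpEq 0 0 78"
    "prog ! 83 = Const 19 0"
    "prog ! 84 = JmpLe 16 19 89"
    "prog ! 85 = Add 2 14 19"
    "prog ! 86 = Store 2 9"
    "prog ! 87 = Add 19 19 6"
    "prog ! 88 = JmpEq 0 0 84"
    "prog ! 89 = Const 19 0"
    "prog ! 90 = JmpLe 15 19 139"
    "prog ! 91 = Add 20 19 5"
    "prog ! 92 = Add 21 14 17"
    "prog ! 93 = Sub 21 21 6"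
    "prog ! 94 = Const 22 0"
    "prog ! 95 = JmpLe 11 22 106"
    "prog ! 96 = Dvd 2 20 8"
    "prog ! 97 = Add 2 2 13"
    "prog ! 98 = Load 23 2"
    "prog ! 99 = Mul 2 23 8"
    "prog ! 100 = Sub 2 20 2"
    "prog ! 101 = Store 21 2"
    "prog ! 102 = Add 20 23 5"
    "prog ! 103 = Sub 21 21 6"
    "prog ! 104 = Add 22 22 6"
    "prog ! 105 = JmpEq 0 0 95"
    "prog ! 106 = Add 25 6 5"
    "prog ! 107 = Const 26 0"
    "prog ! 108 = JmpLe 17 26 134"
    "prog ! 109 = Const 27 0"
    "prog ! 110 = Const 28 0"
    "prog ! 111 = Add 24 14 26"
    "prog ! 112 = JmpLe 11 28 119"
    "prog ! 113 = Load 2 24"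
    "prog ! 114 = Mul 27 27 8"
    "prog ! 115 = Add 27 27 2"
    "prog ! 116 = Add 24 24 6"
    "prog ! 117 = Add 28 28 6"
    "prog ! 118 = JmpEq 0 0 112"
    "prog ! 119 = Mul 31 27 8"
    "prog ! 120 = Add 31 31 12"
    "prog ! 121 = Const 29 0"
    "prog ! 122 = Const 30 0"
    "prog ! 123 = JmpLe 8 30 131"
    "prog ! 124 = Add 2 31 30"
    "prog ! 125 = Load 2 2"
    "prog ! 126 = Cnj 3 2"
    "prog ! 127 = Mul 2 2 3"
    "prog ! 128 = Add 29 29 2"
    "prog ! 129 = Add 30 30 6"
    "prog ! 130 = JmpEq 0 0 123"
    "prog ! 131 = Mul 25 25 29"
    "prog ! 132 = Add 26 26 6"
    "prog ! 133 = JmpEq 0 0 108"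
    "prog ! 134 = JmpEq 25 6 137"
    "prog ! 135 = Const 0 0"
    "prog ! 136 = Halt"
    "prog ! 137 = Add 19 19 6"
    "prog ! 138 = JmpEq 0 0 90"
    "prog ! 139 = Const 0 1"
    "prog ! 140 = Halt"
  by (simp_all add: prog_def)

lemmas step_simps = step_def halted_def prog_length prog_nth


definition mem_size :: "nat \<Rightarrow> nat \<Rightarrow> nat" where
  "mem_size k r = 3 + r + k ^ (r + 1)"

definition table_base :: "nat \<Rightarrow> nat \<Rightarrow> nat" where
  "table_base k r = 64 * mem_size k r + 3 + r"

definition ident_base :: "nat \<Rightarrow> nat \<Rightarrow> nat" where
  "ident_base k r = 66 * mem_size k r"

definition pad_base :: "nat \<Rightarrow> nat \<Rightarrow> nat" where
  "pad_base k r = 67 * mem_size k r"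

lemma layout_bounds:
  assumes k: "2 \<le> k" and r: "1 \<le> r"
  shows "8 \<le> mem_size k r" "k ^ r < mem_size k r" "k ^ (r + 1) < mem_size k r"
    "3 * r - 2 < mem_size k r" "table_base k r + k ^ (r + 1) \<le> 65 * mem_size k r"
    "64 * mem_size k r \<le> table_base k r"
proof -
  have "r + 1 \<le> 2 ^ r" using less_exp[of r] by (simp add: Suc_leI)
  also have "\<dots> \<le> k ^ r" using k by (intro power_mono) auto
  finally have kr: "r + 1 \<le> k ^ r" .
  have "2 * k ^ r \<le> k ^ (r + 1)" using mult_le_mono1[OF k, of "k ^ r"] by simp
  with kr r show "8 \<le> mem_size k r" "k ^ r < mem_size k r" "k ^ (r + 1) < mem_size k r"
    "3 * r - 2 < mem_size k r" "table_base k r + k ^ (r + 1) \<le> 65 * mem_size k r"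
    "64 * mem_size k r \<le> table_base k r"
    unfolding mem_size_def table_base_def by (linarith | simp)+
qed

lemma init_mem_registers:
  assumes "length N = r"
  shows "init_mem k q N \<delta> 0 = of_nat k" "init_mem k q N \<delta> 1 = of_nat r" "init_mem k q N \<delta> 2 = of_nat q"
  using assms unfolding init_mem_def by (simp_all add: Let_def)

lemma init_mem_table:
  assumes r: "length N = r" and w: "w \<in> words k r" and x: "x < k"
  shows "init_mem k q N \<delta> (3 + r + word_index k w * k + x) = \<delta> w x"
proof -
  let ?a = "3 + r + word_index k w * k + x"
  have "(THE z. \<exists>w'\<in>words k r. \<exists>x'<k. ?a = 3 + r + word_index k w' * k + x' \<and> z = \<delta> w' x') = \<delta> w x"
  proof (rule the_equality)
    fix z assume "\<exists>w'\<in>words k r. \<exists>x'<k. ?a = 3 + r + word_index k w' * k + x' \<and> z = \<delta> w' x'"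
    then obtain w' x' where w': "w' \<in> words k r" "x' < k" "z = \<delta> w' x'"
      and eq: "word_index k w * k + x = word_index k w' * k + x'"
      by auto
    have "word_index k w = word_index k w'" "x = x'"
      using arg_cong[OF eq, of "\<lambda>a. a div k"] arg_cong[OF eq, of "\<lambda>a. a mod k"] x w'(2) by auto
    then show "z = \<delta> w x"
      using digits_word_index[OF w] digits_word_index[OF w'(1)] w'(3) by metis
  qed (use w x in blast)
  then show ?thesis unfolding init_mem_def Let_def r using w x by auto
qed

text \<open>The program increments a register \<open>x\<close> by computing \<open>(x c + c) / c\<close> for a nonzero \<open>c\<close>.\<close>

lemma add_divide_self_eq [simp]: "(c::complex) \<noteq> 0 \<Longrightarrow> (x * c + c) / c = x + 1"
  by (simp add: field_simps)

definition power_inv :: "nat \<Rightarrow> nat \<Rightarrow> nat \<Rightarrow> (nat \<Rightarrow> complex) \<Rightarrow> nat \<Rightarrow> (nat \<Rightarrow> complex) \<Rightarrow> bool" where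
  "power_inv k q r mi j m \<longleftrightarrow> m 0 = of_nat k \<and> m 1 = of_nat r + \<i> * of_nat q \<and> m 2 = of_nat (k ^ j)
     \<and> m 3 = of_nat j \<and> unchanged_outside {1,2,3} mi m"

lemma entry_seg:
  assumes k: "2 \<le> k" and m: "m 0 = of_nat k" "m 1 = of_nat r" "m 2 = of_nat q"
  shows "reach prog (0, m) (\<lambda>s. fst s = 7 \<and> power_inv k q r m 0 (snd s)) 7"
proof -
  have pc: "prog ! Suc 0 = JmpEq 0 3 139" "Suc (Suc 0) = 2" using prog_nth(2) by simp_all
  have "k \<noteq> 1" "k \<noteq> 0" using k by auto
  then show ?thesis
    using m
    apply -
    apply (rule reach_stepI, simp add: step_simps pc)+
    apply (rule reach_now)
    apply (simp add: power_inv_def unchanged_outside_def)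
    done
qed

lemma power_loop:
  assumes k: "2 \<le> k" and start: "power_inv k q r mi 0 m"
  shows "reach prog (7, m) (\<lambda>s. fst s = 14 \<and> power_inv k q r mi (r + 1) (snd s)) ((r + 1) * 6 + 2)"
proof (rule reach_loop_simple[where I = "power_inv k q r mi", OF _ _ start])
  fix j m assume "j < r + 1" "power_inv k q r mi j m"
  then show "reach prog (7, m) (\<lambda>s. fst s = 7 \<and> power_inv k q r mi (Suc j) (snd s)) 6"
    using k unfolding power_inv_def
    apply -
    apply (rule reach_stepI, simp add: step_simps)+
    apply (rule reach_now)
    apply (simp add: unchanged_outside_def)
    done
next
  fix m assume "power_inv k q r mi (r + 1) m"
  then show "reach prog (7, m) (\<lambda>s. fst s = 14 \<and> power_inv k q r mi (r + 1) (snd s)) 2"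
    unfolding power_inv_def
    apply -
    apply (rule reach_stepI, simp add: step_simps)+
    apply (rule reach_now)
    apply simp
    done
qed

lemma mem_size_seg:
  assumes k: "2 \<le> k" and inv: "power_inv k q r mi (r + 1) m"
  shows "reach prog (14, m) (\<lambda>s. fst s = 26 \<and> snd s 0 = of_nat k \<and> snd s 1 = of_nat k + \<i> * of_nat q
      \<and> snd s 2 = of_nat (k ^ (r + 1)) \<and> snd s 3 = of_nat (mem_size k r)
      \<and> unchanged_outside {1,2,3} mi (snd s)) 12"
  using inv k unfolding power_inv_def
  apply -
  apply (rule reach_stepI, simp add: step_simps)+
  apply (rule reach_now)
  apply (simp add: unchanged_outside_def mem_size_def)
  done


definition relocate_inv ::
  "nat \<Rightarrow> nat \<Rightarrow> nat \<Rightarrow> nat \<Rightarrow> nat \<Rightarrow> (nat \<Rightarrow> complex) \<Rightarrow> nat \<Rightarrow> (nat \<Rightarrow> complex) \<Rightarrow> bool" where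
  "relocate_inv k q r E p mi i m \<longleftrightarrow> m 3 = of_nat E \<and> m 2 = of_nat (3 + r + i)
     \<and> m (65 * E) = of_nat k + \<i> * of_nat q \<and> m (Suc (65 * E)) = of_nat p
     \<and> (\<forall>a<i. m (64 * E + (3 + r + a)) = mi (3 + r + a))
     \<and> unchanged_outside ({0, 1, 2, 3, 65 * E, Suc (65 * E)} \<union> {64 * E + (3 + r)..<64 * E + (3 + r) + i}) mi m"

lemma relocate_entry_seg:
  assumes k: "2 \<le> k" and r: "1 \<le> r" and E: "E = mem_size k r"
    and m: "m 0 = of_nat k" "m 1 = of_nat k + \<i> * of_nat q" "m 2 = of_nat (k ^ (r + 1))"
      "m 3 = of_nat E" "unchanged_outside {1,2,3} mi m"
  shows "reach prog (26, m) (\<lambda>s. fst s = 34 \<and> relocate_inv k q r E (k ^ (r + 1)) mi 0 (snd s)) 8"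
proof -
  have "8 \<le> E" using layout_bounds(1)[OF k r] E by simp
  then have "65 * E \<noteq> 0" "65 * E \<noteq> 1" "65 * E \<noteq> 2" "65 * E \<noteq> 3" "0 < E"
    by auto
  then show ?thesis
    using m
    apply -
    apply (rule reach_stepI, simp add: step_simps)+
    apply (rule reach_now)
    apply (simp add: relocate_inv_def unchanged_outside_def E mem_size_def)
    done
qed

lemma relocate_post:
  assumes inv: "relocate_inv k q r E p mi i m" and src: "src = 3 + r + i"
    and i: "i < p" and E: "E = 3 + r + p"
    and m': "m' 3 = m 3" "m' 2 = of_nat src + 1" "m' (64 * E + src) = mi src"
      "\<forall>a. a \<notin> {0, 1, 2, 64 * E + src} \<longrightarrow> m' a = m a"
  shows "relocate_inv k q r E p mi (Suc i) m'"
proof -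
  have m: "m 3 = of_nat E" "m (65 * E) = of_nat k + \<i> * of_nat q" "m (Suc (65 * E)) = of_nat p"
    "\<forall>a<i. m (64 * E + (3 + r + a)) = mi (3 + r + a)"
    "unchanged_outside ({0, 1, 2, 3, 65 * E, Suc (65 * E)} \<union> {64 * E + (3 + r)..<64 * E + (3 + r) + i}) mi m"
    using inv unfolding relocate_inv_def by auto
  have ne: "64 * E + src \<noteq> 65 * E" "64 * E + src \<noteq> Suc (65 * E)" "64 * E + src \<notin> {0, 1, 2}"
    using src i E by auto
  show ?thesis unfolding relocate_inv_def
  proof (intro conjI)
    show "m' 3 = of_nat E" "m' 2 = of_nat (3 + r + Suc i)" using m' m src by simp_all
    show "m' (65 * E) = of_nat k + \<i> * of_nat q" "m' (Suc (65 * E)) = of_nat p"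
      using m'(4) m(2,3) ne E by auto
    show "\<forall>a<Suc i. m' (64 * E + (3 + r + a)) = mi (3 + r + a)"
    proof (intro allI impI)
      fix a assume "a < Suc i"
      then consider "a = i" | "a < i" by linarith
      then show "m' (64 * E + (3 + r + a)) = mi (3 + r + a)"
      proof cases
        case 2
        then have "64 * E + (3 + r + a) \<notin> {0, 1, 2, 64 * E + src}" using src by auto
        then show ?thesis using m'(4) m(4) 2 by auto
      qed (use m'(3) src in simp)
    qed
    show "unchanged_outside ({0, 1, 2, 3, 65 * E, Suc (65 * E)}
        \<union> {64 * E + (3 + r)..<64 * E + (3 + r) + Suc i}) mi m'"
      using m'(4) m(5) src unfolding unchanged_outside_def by auto
  qed
qed

lemma relocate_loop:
  assumes r: "1 \<le> r" and E: "E = 3 + r + p" and start: "relocate_inv k q r E p mi 0 m"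
  shows "reach prog (34, m) (\<lambda>s. fst s = 44 \<and> relocate_inv k q r E p mi p (snd s)) (p * 10 + 1)"
proof (rule reach_loop_simple[where I = "relocate_inv k q r E p mi", OF _ _ start])
  fix i m assume i: "i < p" and inv: "relocate_inv k q r E p mi i m"
  define src where "src = 3 + r + i"
  have "src \<notin> {0, 1, 2, 3, 65 * E, Suc (65 * E)} \<union> {64 * E + (3 + r)..<64 * E + (3 + r) + i}"
    using src_def E i r by auto
  then have "m src = mi src" "m 3 = of_nat E" "m 2 = of_nat src"
    using inv unfolding relocate_inv_def unchanged_outside_def src_def by auto
  moreover have "\<not> E \<le> src" "0 < E" "64 * E + src \<notin> {0, 1, 2, 3}"
    using E src_def i by auto
  ultimately show "reach prog (34, m) (\<lambda>s. fst s = 34 \<and> relocate_inv k q r E p mi (Suc i) (snd s)) 10"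
    apply -
    apply (rule reach_stepI, simp add: step_simps)+
    apply (rule reach_now)
    apply (simp only: fst_conv snd_conv simp_thms)
    apply (rule relocate_post[OF inv src_def i E])
    apply simp_all
    done
next
  fix m assume "relocate_inv k q r E p mi p m"
  then show "reach prog (34, m) (\<lambda>s. fst s = 44 \<and> relocate_inv k q r E p mi p (snd s)) 1"
    using E unfolding relocate_inv_def
    apply -
    apply (rule reach_stepI, simp add: step_simps)
    apply (rule reach_now)
    apply simp
    done
qed

definition input_saved :: "nat \<Rightarrow> nat \<Rightarrow> nat \<Rightarrow> (nat list \<Rightarrow> nat \<Rightarrow> complex) \<Rightarrow> (nat \<Rightarrow> complex) \<Rightarrow> bool" where
  "input_saved k q r \<delta> m \<longleftrightarrow> m 3 = of_nat (mem_size k r)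
     \<and> m (65 * mem_size k r) = of_nat k + \<i> * of_nat q
     \<and> m (Suc (65 * mem_size k r)) = of_nat (k ^ (r + 1))
     \<and> (\<forall>w\<in>words k r. \<forall>x<k. m (table_base k r + word_index k w * k + x) = \<delta> w x)"

lemma prologue_seg:
  assumes k: "2 \<le> k" and r: "1 \<le> length N"
  shows "reach prog (0, init_mem k q N \<delta>) (\<lambda>s. fst s = 44 \<and> input_saved k q (length N) \<delta> (snd s))
    (7 + ((length N + 1) * 6 + 2) + 12 + 8 + (k ^ (length N + 1) * 10 + 1))"
proof -
  define r where "r = length N"
  define mi where "mi = init_mem k q N \<delta>"
  define E where "E = mem_size k r"
  define p where "p = k ^ (r + 1)"
  have E_eq: "E = 3 + r + p" unfolding E_def mem_size_def p_def ..
  have r1: "1 \<le> r" using r unfolding r_def .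
  let ?Q1 = "\<lambda>s. fst s = 7 \<and> power_inv k q r mi 0 (snd s)"
  let ?Q2 = "\<lambda>s. fst s = 14 \<and> power_inv k q r mi (r + 1) (snd s)"
  let ?Q3 = "\<lambda>s. fst s = 26 \<and> snd s 0 = of_nat k \<and> snd s 1 = of_nat k + \<i> * of_nat q
      \<and> snd s 2 = of_nat p \<and> snd s 3 = of_nat E \<and> unchanged_outside {1,2,3} mi (snd s)"
  let ?Q4 = "\<lambda>s. fst s = 34 \<and> relocate_inv k q r E p mi 0 (snd s)"
  let ?Q5 = "\<lambda>s. fst s = 44 \<and> relocate_inv k q r E p mi p (snd s)"
  have s1: "reach prog (0, mi) ?Q1 7"
    unfolding mi_def by (rule entry_seg[OF k init_mem_registers[OF r_def[symmetric]]])
  have s2: "reach prog s ?Q2 ((r + 1) * 6 + 2)" if "?Q1 s" for s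
    using power_loop[OF k, of q r mi "snd s"] that by (cases s) auto
  have s3: "reach prog s ?Q3 12" if "?Q2 s" for s
    using mem_size_seg[OF k, of q r mi "snd s"] that unfolding p_def E_def by (cases s) auto
  have s4: "reach prog s ?Q4 8" if "?Q3 s" for s
    using relocate_entry_seg[OF k r1 E_def, of "snd s" q mi] that unfolding p_def by (cases s) auto
  have s5: "reach prog s ?Q5 (p * 10 + 1)" if "?Q4 s" for s
    using relocate_loop[OF r1 E_eq, of k q mi "snd s"] that by (cases s) auto
  have reloc: "reach prog (0, mi) ?Q5 (7 + ((r + 1) * 6 + 2) + 12 + 8 + (p * 10 + 1))"
    by (rule reach_seq[OF reach_seq[OF reach_seq[OF reach_seq[OF s1 s2] s3] s4] s5])
  have saved:  "input_saved k q r \<delta> m" if "relocate_inv k q r E p mi p m" for m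
    unfolding input_saved_def
  proof (intro conjI ballI allI impI)
    show "m 3 = of_nat (mem_size k r)" "m (65 * mem_size k r) = of_nat k + \<i> * of_nat q"
      "m (Suc (65 * mem_size k r)) = of_nat (k ^ (r + 1))"
      using that unfolding relocate_inv_def E_def p_def by auto
    fix w x assume wx: "w \<in> words k r" "x < k"
    have "word_index k w * k + x < p" unfolding p_def by (rule table_index_less[OF wx])
    then have "m (64 * E + (3 + r + (word_index k w * k + x))) = mi (3 + r + (word_index k w * k + x))"
      using that unfolding relocate_inv_def by blast
    then show "m (table_base k r + word_index k w * k + x) = \<delta> w x"
      using init_mem_table[OF r_def[symmetric] wx] unfolding mi_def table_base_def E_def
      by (simp add: add.assoc)
  qed
  show ?thesis
    unfolding r_def[symmetric] mi_def[symmetric] p_def[symmetric]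
    by (rule reach_mono[OF reloc order_refl]) (use saved in blast)
qed


definition registers_ok :: "nat \<Rightarrow> nat \<Rightarrow> nat \<Rightarrow> (nat list \<Rightarrow> nat \<Rightarrow> complex) \<Rightarrow> (nat \<Rightarrow> complex) \<Rightarrow> bool" where
  "registers_ok k q r \<delta> m \<longleftrightarrow> m 5 = 0 \<and> m 6 = 1 \<and> m 8 = of_nat k \<and> m 9 = of_nat q \<and> m 11 = of_nat r
    \<and> m 12 = of_nat (table_base k r) \<and> m 13 = of_nat (ident_base k r) \<and> m 14 = of_nat (pad_base k r)
    \<and> m 15 = of_nat (k ^ r) \<and> m 16 = of_nat (3 * r - 2) \<and> m 17 = of_nat (2 * r - 1)
    \<and> (\<forall>w\<in>words k r. \<forall>x<k. m (table_base k r + word_index k w * k + x) = \<delta> w x)"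

definition globals_ok :: "nat \<Rightarrow> nat \<Rightarrow> nat \<Rightarrow> (nat list \<Rightarrow> nat \<Rightarrow> complex) \<Rightarrow> (nat \<Rightarrow> complex) \<Rightarrow> bool" where
  "globals_ok k q r \<delta> m \<longleftrightarrow> registers_ok k q r \<delta> m \<and> (\<forall>a<k ^ r. m (ident_base k r + a) = of_nat a)"

lemma registers_ok_unchanged:
  assumes k: "2 \<le> k" and r: "1 \<le> r" and m: "registers_ok k q r \<delta> m"
    and m': "unchanged_outside A m m'" and A: "A \<subseteq> {0, 2, 3} \<union> {19..<32} \<union> {ident_base k r..}"
  shows "registers_ok k q r \<delta> m'"
proof -
  note L = layout_bounds[OF k r]
  have "m' a = m a" if "a \<in> {5, 6, 8, 9, 11, 12, 13, 14, 15, 16, 17}" for a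
    using that m' A L(1) unfolding unchanged_outside_def ident_base_def by auto
  moreover have "m' (table_base k r + word_index k w * k + x) = m (table_base k r + word_index k w * k + x)"
    if "w \<in> words k r" "x < k" for w x
    using table_index_less[OF that] m' A L(1,5,6) unfolding unchanged_outside_def ident_base_def by auto
  ultimately show ?thesis using m unfolding registers_ok_def by simp
qed

definition scratch :: "nat \<Rightarrow> nat \<Rightarrow> nat set" where
  "scratch k r = {0, 2, 3} \<union> {19..<32} \<union> {pad_base k r..}"

lemma globals_ok_unchanged:
  assumes k: "2 \<le> k" and r: "1 \<le> r" and m: "globals_ok k q r \<delta> m"
    and m': "unchanged_outside A m m'" and A: "A \<subseteq> scratch k r"
  shows "globals_ok k q r \<delta> m'"
proof -
  have "scratch k r \<subseteq> {0, 2, 3} \<union> {19..<32} \<union> {ident_base k r..}"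
    unfolding scratch_def ident_base_def pad_base_def by auto
  then have "registers_ok k q r \<delta> m'"
    using registers_ok_unchanged[OF k r _ m'] m A unfolding globals_ok_def by blast
  moreover have "m' (ident_base k r + a) = m (ident_base k r + a)" if "a < k ^ r" for a
    using that m' A layout_bounds(2)[OF k r]
    unfolding unchanged_outside_def scratch_def ident_base_def pad_base_def by auto
  ultimately show ?thesis using m unfolding globals_ok_def by simp
qed

lemma registers_seg:
  assumes k: "2 \<le> k" and r: "1 \<le> r" and m: "input_saved k q r \<delta> m"
  shows "reach prog (44, m) (\<lambda>s. fst s = 78 \<and> registers_ok k q r \<delta> (snd s) \<and> snd s 19 = 0) 34"
proof -
  define E where "E = mem_size k r"
  define p where "p = k ^ (r + 1)"
  have E8: "8 \<le> E" using layout_bounds(1)[OF k r] unfolding E_def .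
  have "\<forall>a<32. 65 * E \<noteq> a" "0 < E" "0 < k" using E8 k by auto
  moreover have m': "m 3 = of_nat E" "m (65 * E) = of_nat k + \<i> * of_nat q" "m (Suc (65 * E)) = of_nat p"
    using m unfolding input_saved_def E_def p_def by auto
  ultimately have steps: "reach prog (44, m) (\<lambda>s. fst s = 78 \<and> (\<forall>a. 32 \<le> a \<longrightarrow> snd s a = m a)
      \<and> snd s 5 = 0 \<and> snd s 6 = 1 \<and> snd s 8 = of_nat k \<and> snd s 9 = of_nat q
      \<and> snd s 11 = of_nat E - 3 - of_nat p \<and> snd s 12 = 65 * of_nat E - of_nat p
      \<and> snd s 13 = 66 * of_nat E \<and> snd s 14 = 67 * of_nat E \<and> snd s 15 = of_nat (k ^ r)
      \<and> snd s 16 = 3 * of_nat E - 3 * of_nat p - 11 \<and> snd s 17 = 2 * of_nat E + (- 7 - 2 * of_nat p)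
      \<and> snd s 19 = 0) 34"
    apply -
    apply (rule reach_stepI, simp add: step_simps)+
    apply (rule reach_now)
    using E8 apply (simp add: p_def)
    done
  have E_eq: "(of_nat E :: complex) = 3 + of_nat r + of_nat p" unfolding E_def p_def mem_size_def by simp
  have r_diff: "(of_nat (3 * r - 2) :: complex) = 3 * of_nat r - 2"
    "(of_nat (2 * r - 1) :: complex) = 2 * of_nat r - 1"
    using r by (simp_all add: of_nat_diff)
  have regs: "registers_ok k q r \<delta> m'"
    if m': "\<forall>a. 32 \<le> a \<longrightarrow> m' a = m a" "m' 5 = 0" "m' 6 = 1" "m' 8 = of_nat k" "m' 9 = of_nat q"
      "m' 11 = of_nat E - 3 - of_nat p" "m' 12 = 65 * of_nat E - of_nat p"
      "m' 13 = 66 * of_nat E" "m' 14 = 67 * of_nat E" "m' 15 = of_nat (k ^ r)"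
      "m' 16 = 3 * of_nat E - 3 * of_nat p - 11" "m' 17 = 2 * of_nat E + (- 7 - 2 * of_nat p)" for m'
  proof -
    have "m' 16 = of_nat (3 * r - 2)" "m' 17 = of_nat (2 * r - 1)"
      unfolding r_diff m'(11,12) E_eq by (simp_all add: algebra_simps)
    then show ?thesis
      using m' m layout_bounds(1,6)[OF k r] E_eq
      unfolding registers_ok_def input_saved_def table_base_def ident_base_def pad_base_def E_def
      by (simp add: algebra_simps)
  qed
  show ?thesis by (rule reach_mono[OF steps order_refl]) (use regs in auto)
qed


definition ident_inv :: "nat \<Rightarrow> (nat \<Rightarrow> complex) \<Rightarrow> nat \<Rightarrow> (nat \<Rightarrow> complex) \<Rightarrow> bool" where
  "ident_inv IDB m0 a m \<longleftrightarrow> m 19 = of_nat a \<and> (\<forall>b<a. m (IDB + b) = of_nat b)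
     \<and> unchanged_outside ({2, 19} \<union> {IDB..<IDB + a}) m0 m"

lemma ident_loop:
  assumes k: "2 \<le> k" and r: "1 \<le> r" and m0: "registers_ok k q r \<delta> m0" "m0 19 = 0"
  shows "reach prog (78, m0) (\<lambda>s. fst s = 83 \<and> globals_ok k q r \<delta> (snd s)) (k ^ r * 5 + 1)"
proof -
  define IDB where "IDB = ident_base k r"
  have IDB: "32 \<le> IDB" using layout_bounds(1)[OF k r] unfolding IDB_def ident_base_def by simp
  have regs: "m 15 = of_nat (k ^ r)" "m 13 = of_nat IDB" "m 6 = 1" if "ident_inv IDB m0 a m" for a m
    using that m0 IDB unfolding ident_inv_def unchanged_outside_def registers_ok_def IDB_def by auto
  show ?thesis
  proof (rule reach_loop_simple[where I = "ident_inv IDB m0"])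
    fix a m assume a: "a < k ^ r" and inv: "ident_inv IDB m0 a m"
    have "IDB + a \<noteq> 19" "IDB + a \<noteq> 0" "IDB + a \<noteq> 6" "\<not> k ^ r \<le> a" using IDB a by auto
    then show "reach prog (78, m) (\<lambda>s. fst s = 78 \<and> ident_inv IDB m0 (Suc a) (snd s)) 5"
      using inv regs[OF inv] IDB unfolding ident_inv_def
      apply -
      apply (rule reach_stepI, simp add: step_simps)+
      apply (rule reach_now)
      apply (auto simp: less_Suc_eq unchanged_outside_def)
      done
  next
    fix m assume inv: "ident_inv IDB m0 (k ^ r) m"
    have "registers_ok k q r \<delta> m"
      by (rule registers_ok_unchanged[OF k r m0(1), where A = "{2, 19} \<union> {IDB..<IDB + k ^ r}"])
        (use inv in \<open>auto simp: ident_inv_def IDB_def\<close>)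
    then have "globals_ok k q r \<delta> m"
      using inv unfolding globals_ok_def ident_inv_def IDB_def by auto
    then show "reach prog (78, m) (\<lambda>s. fst s = 83 \<and> globals_ok k q r \<delta> (snd s)) 1"
      using inv regs[OF inv] unfolding ident_inv_def
      apply -
      apply (rule reach_stepI, simp add: step_simps)
      apply (rule reach_now)
      apply simp
      done
  qed (use m0 in \<open>simp add: ident_inv_def unchanged_outside_refl\<close>)
qed

definition stores_padded :: "nat \<Rightarrow> nat \<Rightarrow> nat \<Rightarrow> (nat \<Rightarrow> complex) \<Rightarrow> nat list \<Rightarrow> bool" where
  "stores_padded q r SB m u \<longleftrightarrow> (\<forall>p<3 * r - 2. m (SB + p) = of_nat (padded q r u ! p))"

definition pad_inv :: "nat \<Rightarrow> nat \<Rightarrow> (nat \<Rightarrow> complex) \<Rightarrow> nat \<Rightarrow> (nat \<Rightarrow> complex) \<Rightarrow> bool" where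
  "pad_inv q SB m0 a m \<longleftrightarrow> m 19 = of_nat a \<and> (\<forall>b<a. m (SB + b) = of_nat q)
     \<and> unchanged_outside ({2, 19} \<union> {SB..<SB + a}) m0 m"

lemma pad_loop:
  assumes k: "2 \<le> k" and r: "1 \<le> r" and m0: "globals_ok k q r \<delta> m0" "m0 19 = 0"
  shows "reach prog (84, m0) (\<lambda>s. fst s = 89 \<and> globals_ok k q r \<delta> (snd s)
      \<and> stores_padded q r (pad_base k r) (snd s) (replicate r q)) ((3 * r - 2) * 5 + 1)"
proof -
  define SB where "SB = pad_base k r"
  define L where "L = 3 * r - 2"
  have SB: "32 \<le> SB" using layout_bounds(1)[OF k r] unfolding SB_def pad_base_def by simp
  have regs: "m 16 = of_nat L" "m 14 = of_nat SB" "m 6 = 1" "m 9 = of_nat q"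
    if "pad_inv q SB m0 a m" for a m
    using that m0 SB unfolding pad_inv_def unchanged_outside_def globals_ok_def registers_ok_def SB_def L_def
    by auto
  show ?thesis
    unfolding L_def[symmetric]
  proof (rule reach_loop_simple[where I = "pad_inv q SB m0"])
    fix a m assume a: "a < L" and inv: "pad_inv q SB m0 a m"
    have "SB + a \<noteq> 19" "SB + a \<noteq> 0" "SB + a \<noteq> 6" "\<not> L \<le> a" using SB a by auto
    then show "reach prog (84, m) (\<lambda>s. fst s = 84 \<and> pad_inv q SB m0 (Suc a) (snd s)) 5"
      using inv regs[OF inv] SB unfolding pad_inv_def
      apply -
      apply (rule reach_stepI, simp add: step_simps)+
      apply (rule reach_now)
      apply (auto simp: less_Suc_eq unchanged_outside_def)
      done
  next
    fix m assume inv: "pad_inv q SB m0 L m"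
    have "padded q r (replicate r q) = replicate (3 * r - 2) q"
      using r unfolding padded_def by (simp add: replicate_add[symmetric])
    moreover have "globals_ok k q r \<delta> m"
      by (rule globals_ok_unchanged[OF k r m0(1), where A = "{2, 19} \<union> {SB..<SB + L}"])
        (use inv in \<open>auto simp: pad_inv_def scratch_def SB_def\<close>)
    ultimately have "globals_ok k q r \<delta> m \<and> stores_padded q r (pad_base k r) m (replicate r q)"
      using inv unfolding pad_inv_def stores_padded_def SB_def L_def by auto
    then show "reach prog (84, m) (\<lambda>s. fst s = 89 \<and> globals_ok k q r \<delta> (snd s)
        \<and> stores_padded q r (pad_base k r) (snd s) (replicate r q)) 1"
      using inv regs[OF inv] unfolding pad_inv_def
      apply -
      apply (rule reach_stepI, simp add: step_simps)
      apply (rule reach_now)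
      apply simp
      done
  qed (use m0 in \<open>simp add: pad_inv_def unchanged_outside_refl\<close>)
qed

definition word_inv :: "nat \<Rightarrow> nat \<Rightarrow> nat \<Rightarrow> (nat list \<Rightarrow> nat \<Rightarrow> complex) \<Rightarrow> nat \<Rightarrow> (nat \<Rightarrow> complex) \<Rightarrow> bool" where
  "word_inv k q r \<delta> n m \<longleftrightarrow> globals_ok k q r \<delta> m \<and> m 19 = of_nat n
     \<and> (\<exists>u\<in>words k r. stores_padded q r (pad_base k r) m u)
     \<and> (\<forall>n'<n. word_weight k q r \<delta> (digits k r n') = 1)"

lemma tables_seg:
  assumes k: "2 \<le> k" and r: "1 \<le> r" and q: "q < k" and m: "input_saved k q r \<delta> m"
  shows "reach prog (44, m) (\<lambda>s. fst s = 90 \<and> word_inv k q r \<delta> 0 (snd s))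
    (34 + (k ^ r * 5 + 1) + 1 + ((3 * r - 2) * 5 + 1) + 1)"
proof -
  have unchanged: "globals_ok k q r \<delta> (m(19 := 0))" if "globals_ok k q r \<delta> m" for m
    using globals_ok_unchanged[OF k r that, of "{19}"]
    by (simp add: unchanged_outside_def scratch_def)
  have at83: "reach prog (83, m) (\<lambda>s. fst s = 84 \<and> globals_ok k q r \<delta> (snd s) \<and> snd s 19 = 0) 1"
    if "globals_ok k q r \<delta> m" for m
    using unchanged[OF that]
    apply -
    apply (rule reach_stepI, simp add: step_simps)
    apply (rule reach_now)
    apply simp
    done
  have at89: "reach prog (89, m) (\<lambda>s. fst s = 90 \<and> word_inv k q r \<delta> 0 (snd s)) 1"
    if "globals_ok k q r \<delta> m" "stores_padded q r (pad_base k r) m (replicate r q)" for m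
  proof -
    have "stores_padded q r (pad_base k r) (m(19 := 0)) (replicate r q)"
      using that(2) layout_bounds(1)[OF k r] unfolding stores_padded_def pad_base_def by simp
    moreover have "replicate r q \<in> words k r" using q unfolding words_def by auto
    ultimately show ?thesis
      using unchanged[OF that(1)]
      apply -
      apply (rule reach_stepI, simp add: step_simps)
      apply (rule reach_now)
      apply (auto simp: word_inv_def)
      done
  qed
  show ?thesis
    by (rule reach_seq_at[OF reach_seq_at[OF reach_seq_at[OF reach_seq_at[OF
          registers_seg[OF k r m] ident_loop[OF k r, of q \<delta>]] at83] pad_loop[OF k r, of q \<delta>]] at89])
      auto
qed


definition index_inv :: "nat \<Rightarrow> nat \<Rightarrow> nat \<Rightarrow> nat list \<Rightarrow> (nat \<Rightarrow> complex) \<Rightarrow> nat \<Rightarrow> (nat \<Rightarrow> complex) \<Rightarrow> bool" where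
  "index_inv k SB j S m0 i m \<longleftrightarrow> m 28 = of_nat i \<and> m 27 = of_nat (word_index k (take i (drop j S)))
     \<and> m 24 = of_nat (SB + j + i) \<and> unchanged_outside {2, 24, 27, 28} m0 m"

lemma index_loop:
  assumes js: "j + r \<le> length S" and SB: "32 \<le> SB"
    and m0: "m0 11 = of_nat r" "m0 8 = of_nat k" "m0 6 = 1" "\<forall>p<length S. m0 (SB + p) = of_nat (S ! p)"
      "m0 28 = 0" "m0 27 = 0" "m0 24 = of_nat (SB + j)"
  shows "reach prog (112, m0) (\<lambda>s. fst s = 119 \<and> snd s 27 = of_nat (word_index k (take r (drop j S)))
      \<and> unchanged_outside {2, 24, 27, 28} m0 (snd s)) (r * 7 + 1)"
proof (rule reach_loop_simple[where I = "index_inv k SB j S m0"])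
  fix i m assume i: "i < r" and inv: "index_inv k SB j S m0 i m"
  have "m 11 = of_nat r" "m 8 = of_nat k" "m 6 = 1" "m (SB + j + i) = of_nat (S ! (j + i))" "\<not> r \<le> i"
    using inv m0 SB i js unfolding index_inv_def unchanged_outside_def by (auto simp: add.assoc)
  then show "reach prog (112, m) (\<lambda>s. fst s = 112 \<and> index_inv k SB j S m0 (Suc i) (snd s)) 7"
    using inv i js unfolding index_inv_def
    apply -
    apply (rule reach_stepI, simp add: step_simps)+
    apply (rule reach_now)
    apply (simp add: take_Suc_conv_app_nth word_index_snoc unchanged_outside_def)
    done
next
  fix m assume "index_inv k SB j S m0 r m"
  then show "reach prog (112, m) (\<lambda>s. fst s = 119
      \<and> snd s 27 = of_nat (word_index k (take r (drop j S))) \<and> unchanged_outside {2, 24, 27, 28} m0 (snd s)) 1"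
    using m0(1) unfolding index_inv_def unchanged_outside_def
    apply -
    apply (rule reach_stepI, simp add: step_simps)
    apply (rule reach_now)
    apply simp
    done
qed (use m0 in \<open>simp add: index_inv_def unchanged_outside_refl\<close>)

definition norm_inv :: "(nat list \<Rightarrow> nat \<Rightarrow> complex) \<Rightarrow> nat list \<Rightarrow> (nat \<Rightarrow> complex) \<Rightarrow> nat \<Rightarrow> (nat \<Rightarrow> complex) \<Rightarrow> bool" where
  "norm_inv \<delta> v m0 x m \<longleftrightarrow> m 30 = of_nat x \<and> m 29 = (\<Sum>y<x. \<delta> v y * cnj (\<delta> v y))
     \<and> unchanged_outside {2, 3, 29, 30} m0 m"

lemma norm_loop:
  assumes base: "32 \<le> base"
    and m0: "m0 8 = of_nat k" "m0 6 = 1" "m0 31 = of_nat base" "\<forall>y<k. m0 (base + y) = \<delta> v y"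
      "m0 29 = 0" "m0 30 = 0"
  shows "reach prog (123, m0) (\<lambda>s. fst s = 131 \<and> snd s 29 = of_real (weight k \<delta> v)
      \<and> unchanged_outside {2, 3, 29, 30} m0 (snd s)) (k * 8 + 1)"
proof (rule reach_loop_simple[where I = "norm_inv \<delta> v m0"])
  fix x m assume x: "x < k" and inv: "norm_inv \<delta> v m0 x m"
  have "m 8 = of_nat k" "m 6 = 1" "m 31 = of_nat base" "m (base + x) = \<delta> v x" "base + x \<noteq> 2" "\<not> k \<le> x"
    using inv m0 base x unfolding norm_inv_def unchanged_outside_def by auto
  then show "reach prog (123, m) (\<lambda>s. fst s = 123 \<and> norm_inv \<delta> v m0 (Suc x) (snd s)) 8"
    using inv unfolding norm_inv_def
    apply -
    apply (rule reach_stepI, simp add: step_simps)+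
    apply (rule reach_now)
    apply (simp add: unchanged_outside_def)
    done
next
  fix m assume "norm_inv \<delta> v m0 k m"
  then show "reach prog (123, m) (\<lambda>s. fst s = 131 \<and> snd s 29 = of_real (weight k \<delta> v)
      \<and> unchanged_outside {2, 3, 29, 30} m0 (snd s)) 1"
    using m0(1) unfolding norm_inv_def unchanged_outside_def
    apply -
    apply (rule reach_stepI, simp add: step_simps)
    apply (rule reach_now)
    apply (simp add: sum_mult_cnj_eq_weight)
    done
qed (use m0 in \<open>simp add: norm_inv_def unchanged_outside_refl\<close>)


definition window_inv :: "nat \<Rightarrow> nat \<Rightarrow> (nat list \<Rightarrow> nat \<Rightarrow> complex) \<Rightarrow> nat list
    \<Rightarrow> (nat \<Rightarrow> complex) \<Rightarrow> nat \<Rightarrow> (nat \<Rightarrow> complex) \<Rightarrow> bool" where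
  "window_inv k r \<delta> S m0 J m \<longleftrightarrow> m 26 = of_nat J \<and> m 25 = of_real (\<Prod>j<J. weight k \<delta> (take r (drop j S)))
     \<and> unchanged_outside {2, 3, 24, 25, 26, 27, 28, 29, 30, 31} m0 m"

lemma window_index_seg:
  assumes J: "J + r \<le> length S" "\<not> L \<le> J" and SB: "32 \<le> SB"
    and m: "m 17 = of_nat L" "m 14 = of_nat SB" "m 11 = of_nat r" "m 8 = of_nat k" "m 6 = 1"
      "m 26 = of_nat J" "\<forall>p<length S. m (SB + p) = of_nat (S ! p)"
  shows "reach prog (108, m) (\<lambda>s. fst s = 119 \<and> snd s 27 = of_nat (word_index k (take r (drop J S)))
      \<and> unchanged_outside {2, 24, 27, 28} m (snd s)) (4 + (r * 7 + 1))"
proof (rule reach_seq_at)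
  show "reach prog (108, m) (\<lambda>s. fst s = 112 \<and> unchanged_outside {24, 27, 28} m (snd s)
      \<and> snd s 28 = 0 \<and> snd s 27 = 0 \<and> snd s 24 = of_nat (SB + J)) 4"
    using J(2) m(1,2,6)
    apply -
    apply (rule reach_stepI, simp add: step_simps)+
    apply (rule reach_now)
    apply (simp add: unchanged_outside_def)
    done
  fix m1 assume m1: "unchanged_outside {24, 27, 28} m m1 \<and> m1 28 = 0 \<and> m1 27 = 0
    \<and> m1 24 = of_nat (SB + J)"
  moreover have "m1 11 = of_nat r" "m1 8 = of_nat k" "m1 6 = 1" "\<forall>p<length S. m1 (SB + p) = of_nat (S ! p)"
    using m1 m SB unfolding unchanged_outside_def by auto
  ultimately have "reach prog (112, m1) (\<lambda>s. fst s = 119 \<and> snd s 27 = of_nat (word_index k (take r (drop J S)))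
      \<and> unchanged_outside {2, 24, 27, 28} m1 (snd s)) (r * 7 + 1)"
    by (intro index_loop[OF J(1) SB]) auto
  then show "reach prog (112, m1) (\<lambda>s. fst s = 119
      \<and> snd s 27 = of_nat (word_index k (take r (drop J S))) \<and> unchanged_outside {2, 24, 27, 28} m (snd s))
    (r * 7 + 1)"
    by (rule reach_mono)
      (use m1 unchanged_outside_trans[of "{24, 27, 28}" m m1 "{2, 24, 27, 28}"] in auto)
qed

lemma window_weight_seg:
  assumes TB: "32 \<le> TB" and v: "v \<in> words k r"
    and m: "m 8 = of_nat k" "m 6 = 1" "m 12 = of_nat TB" "m 27 = of_nat (word_index k v)"
      "\<forall>w\<in>words k r. \<forall>x<k. m (TB + word_index k w * k + x) = \<delta> w x"
  shows "reach prog (119, m) (\<lambda>s. fst s = 131 \<and> snd s 29 = of_real (weight k \<delta> v)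
      \<and> unchanged_outside {2, 3, 29, 30, 31} m (snd s)) (4 + (k * 8 + 1))"
proof (rule reach_seq_at)
  define base where "base = TB + word_index k v * k"
  show "reach prog (119, m) (\<lambda>s. fst s = 123 \<and> snd s 8 = of_nat k \<and> snd s 6 = 1
      \<and> snd s 31 = of_nat base \<and> (\<forall>y<k. snd s (base + y) = \<delta> v y) \<and> snd s 29 = 0 \<and> snd s 30 = 0
      \<and> unchanged_outside {29, 30, 31} m (snd s)) 4"
    using m v TB unfolding base_def
    apply -
    apply (rule reach_stepI, simp add: step_simps)+
    apply (rule reach_now)
    apply (simp add: unchanged_outside_def algebra_simps)
    done
  fix m' assume m': "m' 8 = of_nat k \<and> m' 6 = 1 \<and> m' 31 = of_nat base
    \<and> (\<forall>y<k. m' (base + y) = \<delta> v y) \<and> m' 29 = 0 \<and> m' 30 = 0 \<and> unchanged_outside {29, 30, 31} m m'"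
  then have "reach prog (123, m') (\<lambda>s. fst s = 131 \<and> snd s 29 = of_real (weight k \<delta> v)
      \<and> unchanged_outside {2, 3, 29, 30} m' (snd s)) (k * 8 + 1)"
    using TB unfolding base_def by (intro norm_loop[of base]) (auto simp: base_def)
  then show "reach prog (123, m') (\<lambda>s. fst s = 131 \<and> snd s 29 = of_real (weight k \<delta> v)
      \<and> unchanged_outside {2, 3, 29, 30, 31} m (snd s)) (k * 8 + 1)"
    by (rule reach_mono)
      (use m' unchanged_outside_trans[of "{29, 30, 31}" m m' "{2, 3, 29, 30}"] in auto)
qed

lemma window_body:
  assumes k: "2 \<le> k" and r: "1 \<le> r" and q: "q < k" and g: "globals_ok k q r \<delta> m0"
    and u: "u \<in> words k r" and S: "stores_padded q r (pad_base k r) m0 u"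
    and J: "J < 2 * r - 1" and inv: "window_inv k r \<delta> (padded q r u) m0 J m"
  shows "reach prog (108, m) (\<lambda>s. fst s = 108 \<and> window_inv k r \<delta> (padded q r u) m0 (Suc J) (snd s))
    (4 + (r * 7 + 1) + (4 + (k * 8 + 1)) + 3)"
proof -
  define S where "S = padded q r u"
  define v where "v = take r (drop J S)"
  define SB where "SB = pad_base k r"
  define TB where "TB = table_base k r"
  define L where "L = 2 * r - 1"
  have len: "length S = 3 * r - 2" using u r unfolding S_def words_def by (simp add: length_padded)
  have v: "v \<in> words k r"
    using padded_in_words[OF u q] len J unfolding v_def S_def words_def
    by (auto dest: in_set_takeD in_set_dropD)
  have lay: "32 \<le> SB" "32 \<le> TB"
    using layout_bounds(1,6)[OF k r] unfolding SB_def TB_def pad_base_def by auto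
  have W: "unchanged_outside {2, 3, 24, 25, 26, 27, 28, 29, 30, 31} m0 m"
    and m_J: "m 26 = of_nat J" "m 25 = of_real (\<Prod>j<J. weight k \<delta> (take r (drop j S)))"
    using inv unfolding window_inv_def S_def by auto
  then have regs: "m 17 = of_nat L" "m 14 = of_nat SB" "m 11 = of_nat r" "m 8 = of_nat k"
    "m 6 = 1" "m 12 = of_nat TB" "\<forall>p<length S. m (SB + p) = of_nat (S ! p)"
    "\<forall>w\<in>words k r. \<forall>x<k. m (TB + word_index k w * k + x) = \<delta> w x"
    using g S lay len
    unfolding globals_ok_def registers_ok_def stores_padded_def unchanged_outside_def SB_def TB_def L_def S_def
    by auto
  have index: "reach prog (108, m) (\<lambda>s. fst s = 119 \<and> snd s 27 = of_nat (word_index k v)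
      \<and> unchanged_outside {2, 24, 27, 28} m (snd s)) (4 + (r * 7 + 1))"
    using J len lay regs m_J unfolding v_def by (intro window_index_seg[where L = L]) (auto simp: L_def)
  have weight: "reach prog (119, m2) (\<lambda>s. fst s = 131 \<and> snd s 29 = of_real (weight k \<delta> v)
      \<and> unchanged_outside {2, 3, 24, 27, 28, 29, 30, 31} m (snd s)) (4 + (k * 8 + 1))"
    if m2: "m2 27 = of_nat (word_index k v) \<and> unchanged_outside {2, 24, 27, 28} m m2" for m2
  proof -
    have "m2 8 = of_nat k" "m2 6 = 1" "m2 12 = of_nat TB"
      "\<forall>w\<in>words k r. \<forall>x<k. m2 (TB + word_index k w * k + x) = \<delta> w x"
      using m2 regs lay unfolding unchanged_outside_def by auto
    then have "reach prog (119, m2) (\<lambda>s. fst s = 131 \<and> snd s 29 = of_real (weight k \<delta> v)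
        \<and> unchanged_outside {2, 3, 29, 30, 31} m2 (snd s)) (4 + (k * 8 + 1))"
      using m2 by (intro window_weight_seg[OF lay(2) v]) auto
    then show ?thesis
      by (rule reach_mono)
        (use m2 unchanged_outside_trans[of "{2, 24, 27, 28}" m m2 "{2, 3, 29, 30, 31}"] in auto)
  qed
  have multiply: "reach prog (131, m3) (\<lambda>s. fst s = 108 \<and> window_inv k r \<delta> S m0 (Suc J) (snd s)) 3"
    if m3: "m3 29 = of_real (weight k \<delta> v) \<and> unchanged_outside {2, 3, 24, 27, 28, 29, 30, 31} m m3" for m3
  proof -
    have "m3 25 = m 25" "m3 26 = m 26" "m3 6 = 1"
      using m3 regs unfolding unchanged_outside_def by auto
    then show ?thesis
      using m3 m_J W unfolding v_def window_inv_def
      apply -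
      apply (rule reach_stepI, simp add: step_simps)+
      apply (rule reach_now)
      apply (simp add: unchanged_outside_def)
      done
  qed
  show ?thesis
    unfolding S_def[symmetric] by (rule reach_seq_at[OF reach_seq_at[OF index weight] multiply]) auto
qed

lemma window_loop:
  assumes k: "2 \<le> k" and r: "1 \<le> r" and q: "q < k" and g: "globals_ok k q r \<delta> m0"
    and u: "u \<in> words k r" and S: "stores_padded q r (pad_base k r) m0 u"
    and m0: "m0 25 = 1" "m0 26 = 0"
  shows "reach prog (108, m0) (\<lambda>s. fst s = 134 \<and> snd s 25 = of_real (word_weight k q r \<delta> u)
      \<and> unchanged_outside {2, 3, 24, 25, 26, 27, 28, 29, 30, 31} m0 (snd s))
    ((2 * r - 1) * (4 + (r * 7 + 1) + (4 + (k * 8 + 1)) + 3) + 1)"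
proof (rule reach_loop_simple[where I = "window_inv k r \<delta> (padded q r u) m0"])
  fix J m assume "J < 2 * r - 1" "window_inv k r \<delta> (padded q r u) m0 J m"
  then show "reach prog (108, m) (\<lambda>s. fst s = 108 \<and> window_inv k r \<delta> (padded q r u) m0 (Suc J) (snd s))
      (4 + (r * 7 + 1) + (4 + (k * 8 + 1)) + 3)"
    by (rule window_body[OF k r q g u S])
next
  fix m assume inv: "window_inv k r \<delta> (padded q r u) m0 (2 * r - 1) m"
  define L where "L = 2 * r - 1"
  have "m 17 = of_nat L" "m 26 = of_nat L"
    using g inv unfolding globals_ok_def registers_ok_def window_inv_def unchanged_outside_def L_def
    by auto
  then show "reach prog (108, m) (\<lambda>s. fst s = 134 \<and> snd s 25 = of_real (word_weight k q r \<delta> u)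
      \<and> unchanged_outside {2, 3, 24, 25, 26, 27, 28, 29, 30, 31} m0 (snd s)) 1"
    using inv unfolding window_inv_def word_weight_def
    apply -
    apply (rule reach_stepI, simp add: step_simps)
    apply (rule reach_now)
    apply simp
    done
qed (use m0 in \<open>simp add: window_inv_def unchanged_outside_refl\<close>)

lemma stores_padded_update:
  assumes "length u = r" "i < r" "stores_padded q r SB m u"
  shows "stores_padded q r SB (m(SB + (r - 1) + i := of_nat d)) (u[i := d])"
  using assms length_padded[OF assms(1), of q] unfolding stores_padded_def padded_list_update[OF assms(1,2)]
  by (auto simp: nth_list_update)

text \<open>The digits of \<open>n\<close> are written from the least significant one, right to left, over the
  middle \<open>r\<close> cells of the padded word; \<open>u\<close> is the word written there before.\<close>

definition digit_inv :: "nat \<Rightarrow> nat \<Rightarrow> nat \<Rightarrow> nat \<Rightarrow> nat \<Rightarrow> nat list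
    \<Rightarrow> (nat \<Rightarrow> complex) \<Rightarrow> nat \<Rightarrow> (nat \<Rightarrow> complex) \<Rightarrow> bool" where
  "digit_inv k q r SB n u m0 t m \<longleftrightarrow> m 22 = of_nat t \<and> m 20 = of_nat (n div k ^ t)
     \<and> m 21 = of_nat (SB + (2 * r - 2) - t) \<and> stores_padded q r SB m (take (r - t) u @ digits k t n)
     \<and> unchanged_outside ({2, 20, 21, 22, 23} \<union> {SB..<SB + (3 * r - 2)}) m0 m"

lemma digit_inv_Suc:
  assumes inv: "digit_inv k q r SB n u m0 t m" and t: "t < r" and u: "length u = r" and SB: "32 \<le> SB"
    and pos: "pos = SB + (2 * r - 2) - t"
    and m': "m' 22 = of_nat t + 1" "m' 20 = of_nat (n div k ^ t div k)" "m' 21 = of_nat pos - 1"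
      "\<forall>p<3 * r - 2. m' (SB + p) = (m(pos := of_nat (n div k ^ t mod k))) (SB + p)"
      "\<forall>a. a \<notin> {2, 20, 21, 22, 23, pos} \<longrightarrow> m' a = m a"
  shows "digit_inv k q r SB n u m0 (Suc t) m'"
  unfolding digit_inv_def
proof (intro conjI)
  show "m' 22 = of_nat (Suc t)" using m' by simp
  have "n div k ^ t div k = n div (k ^ t * k)" by (rule div_mult2_eq[symmetric])
  then have "n div k ^ t div k = n div k ^ Suc t" by (simp add: mult.commute)
  then show "m' 20 = of_nat (n div k ^ Suc t)" using m'(2) by simp
  have "1 \<le> pos" using pos SB t by simp
  then show "m' 21 = of_nat (SB + (2 * r - 2) - Suc t)" using m'(3) pos by (simp add: of_nat_diff)
  have "pos = SB + (r - 1) + (r - 1 - t)" using pos t by simp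
  moreover have "stores_padded q r SB (m(SB + (r - 1) + (r - 1 - t) := of_nat (n div k ^ t mod k)))
      ((take (r - t) u @ digits k t n)[r - 1 - t := n div k ^ t mod k])"
    using inv t u unfolding digit_inv_def by (intro stores_padded_update) auto
  ultimately show "stores_padded q r SB m' (take (r - Suc t) u @ digits k (Suc t) n)"
    using m'(4) unfolding digits_list_update[OF t u] stores_padded_def by simp
  have "pos \<in> {SB..<SB + (3 * r - 2)}" using pos t by auto
  then show "unchanged_outside ({2, 20, 21, 22, 23} \<union> {SB..<SB + (3 * r - 2)}) m0 m'"
    using inv m'(5) unfolding digit_inv_def unchanged_outside_def by auto
qed

lemma digit_body:
  assumes t: "t < r" and u: "length u = r" and k: "2 \<le> k" and n: "n < KR"
    and m0: "m0 11 = of_nat r" "m0 8 = of_nat k" "m0 13 = of_nat IDB" "m0 5 = 0" "m0 6 = 1"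
      "\<forall>a<KR. m0 (IDB + a) = of_nat a" "32 \<le> IDB" "IDB + KR \<le> SB"
    and inv: "digit_inv k q r SB n u m0 t m"
  shows "reach prog (95, m) (\<lambda>s. fst s = 95 \<and> digit_inv k q r SB n u m0 (Suc t) (snd s)) 11"
proof -
  define X where "X = n div k ^ t"
  define pos where "pos = SB + (2 * r - 2) - t"
  have m: "m 22 = of_nat t" "m 20 = of_nat X" "m 21 = of_nat pos"
    "unchanged_outside ({2, 20, 21, 22, 23} \<union> {SB..<SB + (3 * r - 2)}) m0 m"
    using inv unfolding digit_inv_def X_def pos_def by auto
  have "X div k < KR" using n unfolding X_def by (meson div_le_dividend le_less_trans)
  then have "m (X div k + IDB) = of_nat (X div k)"
    using m(4) m0(6-8) unfolding unchanged_outside_def by (auto simp: add.commute)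
  moreover have "m 11 = of_nat r" "m 8 = of_nat k" "m 13 = of_nat IDB" "m 5 = 0" "m 6 = 1"
    using m(4) m0 unfolding unchanged_outside_def by auto
  moreover have "addr (of_nat X / of_nat k + of_nat IDB) = X div k + IDB"
    using addr_divide_of_nat[of k X IDB] k by simp
  moreover have "\<not> r \<le> t" "X div k + IDB \<noteq> 2" "\<forall>a<32. pos \<noteq> a \<and> a \<noteq> pos"
    using t m0(7,8) unfolding pos_def by auto
  ultimately show ?thesis
    using m(1-3)
    apply -
    apply (rule reach_stepI, simp add: step_simps)+
    apply (rule reach_now)
    apply (simp only: fst_conv simp_thms snd_conv)
    apply (rule digit_inv_Suc[OF inv t u _ pos_def])
    using m0(7,8) apply (simp_all add: X_def of_nat_minus_div_mult)
    done
qed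

lemma digit_loop:
  assumes u0: "length u0 = r" and k: "2 \<le> k" and n: "n < KR"
    and m0: "m0 11 = of_nat r" "m0 8 = of_nat k" "m0 13 = of_nat IDB" "m0 5 = 0" "m0 6 = 1"
      "\<forall>a<KR. m0 (IDB + a) = of_nat a" "32 \<le> IDB" "IDB + KR \<le> SB"
      "m0 22 = 0" "m0 20 = of_nat n" "m0 21 = of_nat (SB + (2 * r - 2))" "stores_padded q r SB m0 u0"
  shows "reach prog (95, m0) (\<lambda>s. fst s = 106 \<and> stores_padded q r SB (snd s) (digits k r n)
      \<and> unchanged_outside ({2, 20, 21, 22, 23} \<union> {SB..<SB + (3 * r - 2)}) m0 (snd s)) (r * 11 + 1)"
proof (rule reach_loop_simple[where I = "digit_inv k q r SB n u0 m0"])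
  fix t m assume "t < r" "digit_inv k q r SB n u0 m0 t m"
  then show "reach prog (95, m) (\<lambda>s. fst s = 95 \<and> digit_inv k q r SB n u0 m0 (Suc t) (snd s)) 11"
    by (rule digit_body[OF _ u0 k n m0(1-8)])
next
  fix m assume inv: "digit_inv k q r SB n u0 m0 r m"
  then have "m 11 = of_nat r" "m 22 = of_nat r"
    using m0(1,7,8) unfolding digit_inv_def unchanged_outside_def by auto
  then show "reach prog (95, m) (\<lambda>s. fst s = 106 \<and> stores_padded q r SB (snd s) (digits k r n)
      \<and> unchanged_outside ({2, 20, 21, 22, 23} \<union> {SB..<SB + (3 * r - 2)}) m0 (snd s)) 1"
    using inv unfolding digit_inv_def
    apply -
    apply (rule reach_stepI, simp add: step_simps)
    apply (rule reach_now)
    apply simp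
    done
qed (use m0(9-12) u0 in \<open>simp add: digit_inv_def unchanged_outside_refl\<close>)


definition final :: "nat \<Rightarrow> nat \<Rightarrow> nat \<Rightarrow> (nat list \<Rightarrow> nat \<Rightarrow> complex) \<Rightarrow> state \<Rightarrow> bool" where
  "final k q r \<delta> s \<longleftrightarrow> halted prog s
     \<and> snd s 0 = (if \<forall>n<k ^ r. word_weight k q r \<delta> (digits k r n) = 1 then 1 else 0)"

lemma write_digits_seg:
  assumes k: "2 \<le> k" and r: "1 \<le> r" and n: "n < k ^ r" and u: "length u = r"
    and m: "globals_ok k q r \<delta> m" "m 19 = of_nat n" "m 22 = 0" "m 20 = of_nat n"
      "m 21 = of_nat (pad_base k r + (2 * r - 2))" "stores_padded q r (pad_base k r) m u"
  shows "reach prog (95, m) (\<lambda>s. fst s = 106 \<and> globals_ok k q r \<delta> (snd s) \<and> snd s 19 = of_nat n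
      \<and> stores_padded q r (pad_base k r) (snd s) (digits k r n)) (r * 11 + 1)"
proof -
  define SB where "SB = pad_base k r"
  define IDB where "IDB = ident_base k r"
  define A where "A = {2, 20, 21, 22, 23} \<union> {SB..<SB + (3 * r - 2)}"
  have lay: "32 \<le> IDB" "IDB + k ^ r \<le> SB"
    using layout_bounds(1,2)[OF k r] unfolding SB_def IDB_def ident_base_def pad_base_def by auto
  have "reach prog (95, m) (\<lambda>s. fst s = 106 \<and> stores_padded q r SB (snd s) (digits k r n)
      \<and> unchanged_outside A m (snd s)) (r * 11 + 1)"
    using m lay unfolding A_def SB_def IDB_def globals_ok_def registers_ok_def
    by (intro digit_loop[OF u k n]) auto
  moreover have "A \<subseteq> scratch k r" "19 \<notin> A" using lay unfolding A_def scratch_def SB_def by auto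
  ultimately show ?thesis
    using globals_ok_unchanged[OF k r m(1)] m(2) unfolding SB_def unchanged_outside_def
    by (elim reach_mono) auto
qed

lemma word_digits_seg:
  assumes k: "2 \<le> k" and r: "1 \<le> r" and n: "n < k ^ r"
    and m: "globals_ok k q r \<delta> m" "m 19 = of_nat n" "length u = r" "stores_padded q r (pad_base k r) m u"
  shows "reach prog (90, m) (\<lambda>s. fst s = 108 \<and> globals_ok k q r \<delta> (snd s) \<and> snd s 19 = of_nat n
      \<and> snd s 25 = 1 \<and> snd s 26 = 0 \<and> stores_padded q r (pad_base k r) (snd s) (digits k r n))
    (5 + (r * 11 + 1) + 2)"
proof -
  define SB where "SB = pad_base k r"
  define KR where "KR = k ^ r"
  define L where "L = 2 * r - 1"
  have SB: "32 \<le> SB" using layout_bounds(1)[OF k r] unfolding SB_def pad_base_def by simp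
  have regs: "m' 5 = 0" "m' 6 = 1" "m' 14 = of_nat SB" "m' 15 = of_nat KR" "m' 17 = of_nat L"
    if "globals_ok k q r \<delta> m'" for m'
    using that unfolding globals_ok_def registers_ok_def SB_def KR_def L_def by auto
  have updated: "globals_ok k q r \<delta> m' \<and> m' 19 = m 19 \<and> stores_padded q r SB m' v"
    if "globals_ok k q r \<delta> m" "stores_padded q r SB m v" "unchanged_outside {20, 21, 22, 25, 26} m m'"
    for m m' v
    using globals_ok_unchanged[OF k r that(1,3)] that(2,3) SB
    unfolding scratch_def stores_padded_def unchanged_outside_def by auto
  have "\<not> KR \<le> n" "L = Suc (2 * r - 2)" using n r unfolding KR_def L_def by auto
  then have "reach prog (90, m) (\<lambda>s. fst s = 95 \<and> unchanged_outside {20, 21, 22, 25, 26} m (snd s)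
      \<and> snd s 22 = 0 \<and> snd s 20 = of_nat n \<and> snd s 21 = of_nat (SB + (2 * r - 2))) 5"
    using regs[OF m(1)] m(2)
    apply -
    apply (rule reach_stepI, simp add: step_simps)+
    apply (rule reach_now)
    apply (simp add: unchanged_outside_def)
    done
  moreover have "reach prog (95, m1) (\<lambda>s. fst s = 106 \<and> globals_ok k q r \<delta> (snd s) \<and> snd s 19 = of_nat n
      \<and> stores_padded q r SB (snd s) (digits k r n)) (r * 11 + 1)"
    if "unchanged_outside {20, 21, 22, 25, 26} m m1 \<and> m1 22 = 0 \<and> m1 20 = of_nat n
      \<and> m1 21 = of_nat (SB + (2 * r - 2))" for m1
    using updated[OF m(1) m(4)[folded SB_def]] that m(2) unfolding SB_def
    by (intro write_digits_seg[OF k r n m(3)]) auto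
  moreover have "reach prog (106, m2) (\<lambda>s. fst s = 108 \<and> globals_ok k q r \<delta> (snd s) \<and> snd s 19 = of_nat n
      \<and> snd s 25 = 1 \<and> snd s 26 = 0 \<and> stores_padded q r SB (snd s) (digits k r n)) 2"
    if "globals_ok k q r \<delta> m2 \<and> m2 19 = of_nat n \<and> stores_padded q r SB m2 (digits k r n)" for m2
    using updated[of m2 "digits k r n" "m2(25 := 1, 26 := 0)"] regs[of m2] that
    apply -
    apply (rule reach_stepI, simp add: step_simps)+
    apply (rule reach_now)
    apply (simp add: unchanged_outside_def)
    done
  ultimately show ?thesis
    unfolding SB_def[symmetric] by (rule reach_seq_at[OF reach_seq_at]) auto
qed

lemma word_check_seg:
  assumes k: "2 \<le> k" and r: "1 \<le> r" and n: "n < k ^ r"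
    and m: "globals_ok k q r \<delta> m" "m 19 = of_nat n" "stores_padded q r (pad_base k r) m (digits k r n)"
      "m 25 = of_real (word_weight k q r \<delta> (digits k r n))"
    and prev: "\<forall>n'<n. word_weight k q r \<delta> (digits k r n') = 1"
  shows "reach prog (134, m) (\<lambda>s. fst s = 90 \<and> word_inv k q r \<delta> (Suc n) (snd s) \<or> final k q r \<delta> s) 3"
proof -
  have "m 6 = 1" using m(1) unfolding globals_ok_def registers_ok_def by simp
  show ?thesis
  proof (cases "word_weight k q r \<delta> (digits k r n) = 1")
    case True
    have "globals_ok k q r \<delta> (m(19 := of_nat n + 1))"
      by (rule globals_ok_unchanged[OF k r m(1), of "{19}"]) (auto simp: unchanged_outside_def scratch_def)
    moreover have "stores_padded q r (pad_base k r) (m(19 := of_nat n + 1)) (digits k r n)"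
      using m(3) layout_bounds(1)[OF k r] unfolding stores_padded_def pad_base_def by simp
    moreover have "digits k r n \<in> words k r" using k by (simp add: digits_in_words)
    moreover have "\<forall>n'<Suc n. word_weight k q r \<delta> (digits k r n') = 1"
      using prev True less_Suc_eq by auto
    ultimately show ?thesis
      using m(2,4) True \<open>m 6 = 1\<close>
      apply -
      apply (rule reach_stepI, simp add: step_simps)+
      apply (rule reach_now)
      apply (auto simp: word_inv_def)
      done
  next
    case False
    then have "\<not> (\<forall>n<k ^ r. word_weight k q r \<delta> (digits k r n) = 1)" using n by auto
    then show ?thesis
      using m(4) False \<open>m 6 = 1\<close>
      apply -
      apply (rule reach_stepI, simp add: step_simps)+
      apply (rule reach_now)
      apply (simp add: final_def step_simps)
      done
  qed
qed

definition word_cost :: "nat \<Rightarrow> nat \<Rightarrow> nat" where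
  "word_cost k r = (5 + (r * 11 + 1) + 2) + ((2 * r - 1) * (4 + (r * 7 + 1) + (4 + (k * 8 + 1)) + 3) + 1) + 3"

lemma word_body:
  assumes k: "2 \<le> k" and r: "1 \<le> r" and q: "q < k" and n: "n < k ^ r"
    and inv: "word_inv k q r \<delta> n m"
  shows "reach prog (90, m) (\<lambda>s. fst s = 90 \<and> word_inv k q r \<delta> (Suc n) (snd s) \<or> final k q r \<delta> s)
    (word_cost k r)"
proof -
  obtain u where m: "globals_ok k q r \<delta> m" "m 19 = of_nat n" "u \<in> words k r"
      "stores_padded q r (pad_base k r) m u"
    and prev: "\<forall>n'<n. word_weight k q r \<delta> (digits k r n') = 1"
    using inv unfolding word_inv_def by auto
  let ?Q1 = "\<lambda>s. fst s = 108 \<and> globals_ok k q r \<delta> (snd s) \<and> snd s 19 = of_nat n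
      \<and> snd s 25 = 1 \<and> snd s 26 = 0 \<and> stores_padded q r (pad_base k r) (snd s) (digits k r n)"
  let ?Q2 = "\<lambda>s. fst s = 134 \<and> globals_ok k q r \<delta> (snd s) \<and> snd s 19 = of_nat n
      \<and> stores_padded q r (pad_base k r) (snd s) (digits k r n)
      \<and> snd s 25 = of_real (word_weight k q r \<delta> (digits k r n))"
  have a: "reach prog (90, m) ?Q1 (5 + (r * 11 + 1) + 2)"
    using m(3) unfolding words_def by (intro word_digits_seg[OF k r n m(1,2) _ m(4)]) auto
  have b: "reach prog s ?Q2 ((2 * r - 1) * (4 + (r * 7 + 1) + (4 + (k * 8 + 1)) + 3) + 1)"
    if Q1: "?Q1 s" for s
  proof -
    obtain m' where s: "s = (108, m')" using Q1 by (cases s) auto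
    have "reach prog (108, m') (\<lambda>s. fst s = 134 \<and> snd s 25 = of_real (word_weight k q r \<delta> (digits k r n))
        \<and> unchanged_outside {2, 3, 24, 25, 26, 27, 28, 29, 30, 31} m' (snd s))
      ((2 * r - 1) * (4 + (r * 7 + 1) + (4 + (k * 8 + 1)) + 3) + 1)"
      using Q1 k unfolding s by (intro window_loop[OF k r q]) (auto simp: digits_in_words)
    then show ?thesis
      unfolding s
    proof (rule reach_mono)
      fix s' :: state
      assume s': "fst s' = 134 \<and> snd s' 25 = of_real (word_weight k q r \<delta> (digits k r n))
        \<and> unchanged_outside {2, 3, 24, 25, 26, 27, 28, 29, 30, 31} m' (snd s')"
      then have "globals_ok k q r \<delta> (snd s')"
        using Q1 globals_ok_unchanged[OF k r, of q \<delta> m'] unfolding s scratch_def by auto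
      moreover have "snd s' 19 = of_nat n" "stores_padded q r (pad_base k r) (snd s') (digits k r n)"
        using Q1 s' layout_bounds(1)[OF k r]
        unfolding s unchanged_outside_def stores_padded_def pad_base_def by auto
      ultimately show "?Q2 s'" using s' by simp
    qed simp
  qed
  have c: "reach prog s (\<lambda>s. fst s = 90 \<and> word_inv k q r \<delta> (Suc n) (snd s) \<or> final k q r \<delta> s) 3"
    if "?Q2 s" for s
    using word_check_seg[OF k r n _ _ _ _ prev, of "snd s"] that by (cases s) auto
  show ?thesis
    unfolding word_cost_def by (rule reach_seq[OF reach_seq[OF a b] c])
qed

lemma word_loop:
  assumes k: "2 \<le> k" and r: "1 \<le> r" and q: "q < k" and start: "word_inv k q r \<delta> 0 m"
  shows "reach prog (90, m) (final k q r \<delta>) (k ^ r * word_cost k r + 2)"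
proof (rule reach_loop[where I = "word_inv k q r \<delta>", OF _ _ start])
  fix n m assume "n < k ^ r" "word_inv k q r \<delta> n m"
  then show "reach prog (90, m) (\<lambda>s. fst s = 90 \<and> word_inv k q r \<delta> (Suc n) (snd s) \<or> final k q r \<delta> s)
      (word_cost k r)"
    by (rule word_body[OF k r q])
next
  fix m assume inv: "word_inv k q r \<delta> (k ^ r) m"
  define KR where "KR = k ^ r"
  have "m 15 = of_nat KR" "m 19 = of_nat KR"
    using inv unfolding word_inv_def globals_ok_def registers_ok_def KR_def by auto
  then show "reach prog (90, m) (final k q r \<delta>) 2"
    using inv unfolding word_inv_def
    apply -
    apply (rule reach_stepI, simp add: step_simps)+
    apply (rule reach_now)
    apply (simp add: final_def step_simps)
    done
qed

definition total_time :: "nat \<Rightarrow> nat \<Rightarrow> nat" where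
  "total_time k r = (7 + ((r + 1) * 6 + 2) + 12 + 8 + (k ^ (r + 1) * 10 + 1))
     + (34 + (k ^ r * 5 + 1) + 1 + ((3 * r - 2) * 5 + 1) + 1) + (k ^ r * word_cost k r + 2)"

lemma prog_reaches_final:
  assumes k: "2 \<le> k" and lq: "lqca k q N \<delta>"
  shows "reach prog (0, init_mem k q N \<delta>) (final k q (length N) \<delta>) (total_time k (length N))"
proof -
  have r: "1 \<le> length N" and q: "q < k" using lq unfolding lqca_def by (auto simp: Suc_leI)
  show ?thesis
    unfolding total_time_def
    by (rule reach_seq_at[OF reach_seq_at[OF prologue_seg[OF k r] tables_seg[OF k r q]]
          word_loop[OF k r q]])
qed

lemma prog_unary:
  assumes "m 0 = 1"
  shows "reach prog (0, m) (\<lambda>s. halted prog s \<and> snd s 0 = 1) 3"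
proof -
  have pc: "prog ! Suc 0 = JmpEq 0 3 139" using prog_nth(2) by simp
  show ?thesis
    using assms
    apply -
    apply (rule reach_stepI, simp add: step_simps pc)+
    apply (rule reach_now)
    apply (simp add: step_simps)
    done
qed


section \<open>Running time\<close>

lemma square_le_four_mult_power_two: "r * r \<le> 4 * 2 ^ r"
proof (induction r rule: less_induct)
  case (less r)
  show ?case
  proof (cases "r \<le> 3")
    case True
    then have "r = 0 \<or> r = 1 \<or> r = 2 \<or> r = 3" by auto
    then show ?thesis by auto
  next
    case False
    then obtain s where s: "r = Suc s" "3 \<le> s" by (cases r) auto
    have "3 * s \<le> s * s" using mult_le_mono1[OF s(2), of s] by simp
    moreover have "r * r = s * s + (2 * s + 1)" using s(1) by (simp add: algebra_simps)
    ultimately have "r * r \<le> 2 * (s * s)" using s(2) by linarith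
    also have "\<dots> \<le> 2 * (4 * 2 ^ s)" using less s by simp
    finally show ?thesis using s by simp
  qed
qed

lemma word_cost_le: "word_cost k r \<le> 12 + 37 * r + 14 * (r * r) + 16 * (r * k)"
proof -
  have "(2 * r - 1) * (4 + (r * 7 + 1) + (4 + (k * 8 + 1)) + 3) \<le> (2 * r) * (7 * r + 8 * k + 13)"
    by (rule mult_le_mono) simp_all
  also have "\<dots> = 14 * (r * r) + 16 * (r * k) + 26 * r" by (simp add: algebra_simps)
  finally show ?thesis unfolding word_cost_def by simp
qed

lemma total_time_le:
  assumes k: "2 \<le> k" and r: "1 \<le> r"
  shows "total_time k r \<le> 300 * (k ^ (r + 1))\<^sup>2"
proof -
  define K where "K = k ^ r"
  define p where "p = k ^ (r + 1)"
  have "2 ^ r \<le> K" unfolding K_def using k by (intro power_mono) auto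
  then have rK: "r \<le> K" and rr: "r * r \<le> 4 * K"
    using less_exp[of r] square_le_four_mult_power_two[of r] by linarith+
  have p: "p = k * K" unfolding p_def K_def by simp
  have K1: "1 \<le> K" using rK r by simp
  have Kp: "K \<le> p" unfolding p using mult_le_mono1[of 1 k K] k by linarith
  have kp: "k \<le> p" unfolding p using mult_le_mono2[OF K1, of k] by linarith
  have KK: "K * K \<le> p * p" using mult_mono[OF Kp Kp] by simp
  have "r * k * K = r * p" unfolding p by (simp add: mult.assoc)
  then have "r * k * K \<le> p * p" using mult_le_mono1[OF rK, of p] mult_le_mono1[OF Kp, of p] by linarith
  moreover have "1 \<le> p * p" "K \<le> p * p" "r \<le> p * p" "p \<le> p * p"
    using K1 le_square[of K] le_square[of p] KK rK by linarith+
  moreover have "r * K \<le> p * p" using mult_le_mono1[OF rK, of K] KK by linarith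
  moreover have "r * r * K \<le> 4 * (p * p)" using mult_le_mono1[OF rr, of K] KK by linarith
  moreover have "K * word_cost k r \<le> K * (12 + 37 * r + 14 * (r * r) + 16 * (r * k))"
    by (rule mult_le_mono2[OF word_cost_le])
  then have "K * word_cost k r \<le> 12 * K + 37 * (r * K) + 14 * (r * r * K) + 16 * (r * k * K)"
    by (simp add: algebra_simps)
  moreover have "total_time k r \<le> K * word_cost k r + 76 + 21 * r + 10 * p + 5 * K"
    unfolding total_time_def K_def p_def by simp
  ultimately have "total_time k r \<le> 300 * (p * p)" by linarith
  then show ?thesis unfolding p_def by (simp add: power2_eq_square)
qed

theorem theorem4:
  "\<exists>(P :: instr list) (C :: nat).
     \<forall>k q (N :: int list) (\<delta> :: nat list \<Rightarrow> nat \<Rightarrow> complex).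
       simple_lqca k q N \<delta> \<longrightarrow>
       (\<exists>t \<le> C * (k ^ (length N + 1))\<^sup>2.
          halted P (run P (0, init_mem k q N \<delta>) t) \<and>
          snd (run P (0, init_mem k q N \<delta>) t) 0 = (if all_columns_unit k q N \<delta> then 1 else 0))"
proof (rule exI[of _ prog], rule exI[of _ 300], intro allI impI)
  fix k q N \<delta> assume simple: "simple_lqca k q N \<delta>"
  then have lq: "lqca k q N \<delta>" unfolding simple_lqca_def by simp
  then have r: "1 \<le> length N" and "0 < k" unfolding lqca_def by (simp_all add: Suc_leI)
  let ?output = "\<lambda>s. halted prog s \<and> snd s 0 = (if all_columns_unit k q N \<delta> then 1 else 0)"
  have "reach prog (0, init_mem k q N \<delta>) ?output (300 * (k ^ (length N + 1))\<^sup>2)"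
  proof (cases "k = 1")
    case True
    then have "reach prog (0, init_mem k q N \<delta>) (\<lambda>s. halted prog s \<and> snd s 0 = 1) 3"
      by (intro prog_unary) (simp add: init_mem_registers[OF refl])
    then show ?thesis using all_columns_unit_unary simple True by (elim reach_mono) auto
  next
    case False
    then have k: "2 \<le> k" using \<open>0 < k\<close> by simp
    have "?output s" if "final k q (length N) \<delta> s" for s
      using that all_columns_unit_iff_word_weight[OF simple]
        all_digits_iff_all_words[OF \<open>0 < k\<close>, where P = "\<lambda>w. word_weight k q (length N) \<delta> w = 1"]
      unfolding final_def by simp
    then show ?thesis using prog_reaches_final[OF k lq] total_time_le[OF k r] by (elim reach_mono) auto
  qed
  then show "\<exists>t \<le> 300 * (k ^ (length N + 1))\<^sup>2. halted prog (run prog (0, init_mem k q N \<delta>) t) \<and>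
      snd (run prog (0, init_mem k q N \<delta>) t) 0 = (if all_columns_unit k q N \<delta> then 1 else 0)"
    unfolding reach_def .
qed

end
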